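(* Let $\mathsf U$ be a pseudovariety and $\mathsf V$ a subpseudovariety of $\mathsf U$. Suppose that $\mathsf V=[\![\Sigma]\!]_{\mathsf U}$ for some set $\Sigma$ of $\mathsf U$-pseudoidentities which is h-strong within $\mathsf U$ and each of whose members is t-strong within $\mathsf U$. Let $\Gamma$ be a set of $\mathsf U$-pseudoidentities such that $[\![\Gamma]\!]_{\mathsf U}\subseteq\mathsf V$. If the set $\Gamma'=\{\pi(u)=\pi(v):(u=v)\in\Gamma\}$ is h-strong within $\mathsf V$, then $\Gamma$ is h-strong within $\mathsf U$.
   Context: A pseudovariety is a nonempty class of finite algebras of a fixed finite type closed under homomorphic images, subalgebras and finite direct products. $\Omega_A\mathsf U$ is the free pro-$\mathsf U$ algebra on the finite set $A$; for $\mathsf V\subseteq\mathsf U$, $\pi=\pi_A:\Omega_A\mathsf U\to\Omega_A\mathsf V$ denotes the natural continuous homomorphism fixing the generators (for each finite $A$). A $\mathsf U$-pseudoidentity is $u=v$ with $u,v\in\Omega_B\mathsf U$, $B$ finite; it holds in $T\in\mathsf U$ if both sides agree under every continuous homomorphism $\Omega_B\mathsf U\to T$; $[\![\Gamma]\!]_{\mathsf U}$ is the class of members of $\mathsf U$ satisfying $\Gamma$. Provability (relative to an ambient pseudovariety $\mathsf W$, here $\mathsf U$ or $\mathsf V$): for a set $\Gamma$ of $\mathsf W$-pseudoidentities and finite $A$, $\Gamma_0\subseteq\Omega_A\mathsf W\times\Omega_A\mathsf W$ is the set of pairs $(\mathbf t(\varphi(u),w_1,\dots,w_n),\mathbf t(\varphi(v),w_1,\dots,w_n))$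 with $u=v$ or $v=u$ in $\Gamma$ ($u,v\in\Omega_B\mathsf W$), $\varphi:\Omega_B\mathsf W\to\Omega_A\mathsf W$ a continuous homomorphism, $\mathbf t$ a term, $w_i\in\Omega_A\mathsf W$; $\Gamma_{2\alpha+1}$ is the transitive closure of $\Gamma_{2\alpha}$; $\Gamma_{2\alpha+2}$ the topological closure of $\Gamma_{2\alpha+1}$; unions at limit ordinals; $u=v$ is provable from $\Gamma$ if $(u,v)\in\bigcup_\alpha\Gamma_\alpha$. A set $\Gamma$ of $\mathsf W$-pseudoidentities is h-strong within $\mathsf W$ if every $\mathsf W$-pseudoidentity valid in $[\![\Gamma]\!]_{\mathsf W}$ is provable from $\Gamma$. A $\mathsf W$-pseudoidentity $\varepsilon$ is t-strong within $\mathsf W$ if $\varepsilon$ is provable from every set $\Gamma$ of $\mathsf W$-pseudoidentities such that $[\![\Gamma]\!]_{\mathsf W}$ satisfies $\varepsilon$. *)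

theory Defs
  imports "HOL-Analysis.Analysis"
begin

text \<open>Finite algebras are represented on subsets of nat (every finite algebra has an
isomorphic copy there); classes are closed under isomorphism via closure under
surjective homomorphisms.\<close>

type_synonym 'f alg = "nat set \<times> ('f \<Rightarrow> nat list \<Rightarrow> nat)"

definition is_alg :: "('f \<Rightarrow> nat) \<Rightarrow> 'f alg \<Rightarrow> bool" where
  "is_alg ar T \<longleftrightarrow> finite (fst T) \<and> fst T \<noteq> {} \<and>
     (\<forall>f xs. length xs = ar f \<and> set xs \<subseteq> fst T \<longrightarrow> snd T f xs \<in> fst T)"

definition is_hom :: "('f \<Rightarrow> nat) \<Rightarrow> 'f alg \<Rightarrow> 'f alg \<Rightarrow> (nat \<Rightarrow> nat) \<Rightarrow> bool" where
  "is_hom ar T T' h \<longleftrightarrow> h \<in> fst T \<rightarrow> fst T' \<and>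
     (\<forall>f xs. length xs = ar f \<and> set xs \<subseteq> fst T \<longrightarrow> h (snd T f xs) = snd T' f (map h xs))"

definition is_subalg :: "('f \<Rightarrow> nat) \<Rightarrow> 'f alg \<Rightarrow> 'f alg \<Rightarrow> bool" where
  "is_subalg ar B T \<longleftrightarrow> fst B \<subseteq> fst T \<and>
     (\<forall>f xs. length xs = ar f \<and> set xs \<subseteq> fst B \<longrightarrow> snd B f xs = snd T f xs)"

definition is_prod :: "('f \<Rightarrow> nat) \<Rightarrow> 'f alg \<Rightarrow> nat set \<Rightarrow> (nat \<Rightarrow> 'f alg) \<Rightarrow> bool" where
  "is_prod ar C I As \<longleftrightarrow> (\<exists>p. bij_betw p (fst C) (PiE I (\<lambda>i. fst (As i))) \<and>
     (\<forall>f xs. length xs = ar f \<and> set xs \<subseteq> fst C \<longrightarrow>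
        p (snd C f xs) = (\<lambda>i\<in>I. snd (As i) f (map (\<lambda>x. p x i) xs))))"

definition pseudovariety :: "('f::finite \<Rightarrow> nat) \<Rightarrow> 'f alg set \<Rightarrow> bool" where
  "pseudovariety ar U \<longleftrightarrow> U \<noteq> {} \<and> (\<forall>T\<in>U. is_alg ar T) \<and>
     (\<forall>T T' h. T \<in> U \<and> is_alg ar T' \<and> is_hom ar T T' h \<and> h ` fst T = fst T' \<longrightarrow> T' \<in> U) \<and>
     (\<forall>T B. T \<in> U \<and> is_alg ar B \<and> is_subalg ar B T \<longrightarrow> B \<in> U) \<and>
     (\<forall>I As. finite I \<and> (\<forall>i\<in>I. As i \<in> U) \<longrightarrow> (\<exists>C\<in>U. is_prod ar C I As))"

text \<open>Free pro-U algebra on A, realised as the algebra of A-ary implicit operations on U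
(families indexed by pairs (T,a), T in U, a : A -> T, compatible with all homomorphisms),
with the pro-U (pointwise / product of discrete) topology.\<close>

type_synonym 'f iop = "'f alg \<times> (nat \<Rightarrow> nat) \<Rightarrow> nat"

definition idx :: "'f alg set \<Rightarrow> nat set \<Rightarrow> ('f alg \<times> (nat \<Rightarrow> nat)) set" where
  "idx U A = {(T, a). T \<in> U \<and> a \<in> A \<rightarrow>\<^sub>E fst T}"

definition Omega :: "('f \<Rightarrow> nat) \<Rightarrow> 'f alg set \<Rightarrow> nat set \<Rightarrow> 'f iop set" where
  "Omega ar U A = {w \<in> extensional (idx U A).
      (\<forall>T a. (T, a) \<in> idx U A \<longrightarrow> w (T, a) \<in> fst T) \<and>
      (\<forall>T T' h a. T \<in> U \<and> T' \<in> U \<and> is_hom ar T T' h \<and> a \<in> A \<rightarrow>\<^sub>E fst T \<longrightarrow>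
          w (T', restrict (h \<circ> a) A) = h (w (T, a)))}"

definition OmegaTop :: "('f \<Rightarrow> nat) \<Rightarrow> 'f alg set \<Rightarrow> nat set \<Rightarrow> 'f iop topology" where
  "OmegaTop ar U A = subtopology
     (product_topology (\<lambda>_. discrete_topology (UNIV :: nat set)) (idx U A)) (Omega ar U A)"

definition omop :: "'f alg set \<Rightarrow> nat set \<Rightarrow> 'f \<Rightarrow> 'f iop list \<Rightarrow> 'f iop" where
  "omop U A f ws = restrict (\<lambda>i. snd (fst i) f (map (\<lambda>w. w i) ws)) (idx U A)"

definition cont_hom :: "('f \<Rightarrow> nat) \<Rightarrow> 'f alg set \<Rightarrow> nat set \<Rightarrow> nat set \<Rightarrow> ('f iop \<Rightarrow> 'f iop) \<Rightarrow> bool" where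
  "cont_hom ar W B A \<phi> \<longleftrightarrow> continuous_map (OmegaTop ar W B) (OmegaTop ar W A) \<phi> \<and>
     (\<forall>f ws. length ws = ar f \<and> set ws \<subseteq> Omega ar W B \<longrightarrow>
        \<phi> (omop W B f ws) = omop W A f (map \<phi> ws))"

definition alg_hom_to :: "('f \<Rightarrow> nat) \<Rightarrow> 'f alg set \<Rightarrow> nat set \<Rightarrow> 'f alg \<Rightarrow> ('f iop \<Rightarrow> nat) \<Rightarrow> bool" where
  "alg_hom_to ar W B T \<psi> \<longleftrightarrow> continuous_map (OmegaTop ar W B) (discrete_topology (fst T)) \<psi> \<and>
     (\<forall>f ws. length ws = ar f \<and> set ws \<subseteq> Omega ar W B \<longrightarrow>
        \<psi> (omop W B f ws) = snd T f (map \<psi> ws))"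

text \<open>A W-pseudoidentity u = v over the finite variable set B is encoded as (B, u, v).\<close>
type_synonym 'f pid = "nat set \<times> 'f iop \<times> 'f iop"

definition is_pid :: "('f \<Rightarrow> nat) \<Rightarrow> 'f alg set \<Rightarrow> 'f pid \<Rightarrow> bool" where
  "is_pid ar W e \<longleftrightarrow> (case e of (B, u, v) \<Rightarrow> finite B \<and> u \<in> Omega ar W B \<and> v \<in> Omega ar W B)"

definition holds :: "('f \<Rightarrow> nat) \<Rightarrow> 'f alg set \<Rightarrow> 'f alg \<Rightarrow> 'f pid \<Rightarrow> bool" where
  "holds ar W T e \<longleftrightarrow> (case e of (B, u, v) \<Rightarrow> \<forall>\<psi>. alg_hom_to ar W B T \<psi> \<longrightarrow> \<psi> u = \<psi> v)"

definition Mods :: "('f \<Rightarrow> nat) \<Rightarrow> 'f alg set \<Rightarrow> 'f pid set \<Rightarrow> 'f alg set" where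
  "Mods ar W \<Gamma> = {T \<in> W. \<forall>e\<in>\<Gamma>. holds ar W T e}"

datatype 'f trm = TVar nat | TApp 'f "'f trm list"

fun wf_trm :: "('f \<Rightarrow> nat) \<Rightarrow> nat \<Rightarrow> 'f trm \<Rightarrow> bool" where
  "wf_trm ar m (TVar i) = (i < m)"
| "wf_trm ar m (TApp f ts) = (length ts = ar f \<and> (\<forall>t\<in>set ts. wf_trm ar m t))"

fun teval :: "'f alg set \<Rightarrow> nat set \<Rightarrow> 'f iop list \<Rightarrow> 'f trm \<Rightarrow> 'f iop" where
  "teval W A env (TVar i) = env ! i"
| "teval W A env (TApp f ts) = omop W A f (map (teval W A env) ts)"

definition Gamma0 :: "('f \<Rightarrow> nat) \<Rightarrow> 'f alg set \<Rightarrow> 'f pid set \<Rightarrow> nat set \<Rightarrow> ('f iop \<times> 'f iop) set" where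
  "Gamma0 ar W \<Gamma> A = {(teval W A (\<phi> u # ws) t, teval W A (\<phi> v # ws) t) | B u v \<phi> t ws.
      ((B, u, v) \<in> \<Gamma> \<or> (B, v, u) \<in> \<Gamma>) \<and> cont_hom ar W B A \<phi> \<and>
      set ws \<subseteq> Omega ar W A \<and> wf_trm ar (Suc (length ws)) t}"

text \<open>Provable pairs: the union of the transfinite chain Gamma_alpha, which equals the
least set containing Gamma_0 that is closed under transitivity and topological closure.\<close>
inductive_set provable :: "('f \<Rightarrow> nat) \<Rightarrow> 'f alg set \<Rightarrow> 'f pid set \<Rightarrow> nat set \<Rightarrow> ('f iop \<times> 'f iop) set"
  for ar W \<Gamma> A where
  base: "p \<in> Gamma0 ar W \<Gamma> A \<Longrightarrow> p \<in> provable ar W \<Gamma> A"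
| trans: "(x, y) \<in> provable ar W \<Gamma> A \<Longrightarrow> (y, z) \<in> provable ar W \<Gamma> A \<Longrightarrow> (x, z) \<in> provable ar W \<Gamma> A"
| clos: "p \<in> (prod_topology (OmegaTop ar W A) (OmegaTop ar W A)) closure_of R \<Longrightarrow>
         (\<And>q. q \<in> R \<Longrightarrow> q \<in> provable ar W \<Gamma> A) \<Longrightarrow> p \<in> provable ar W \<Gamma> A"

definition h_strong :: "('f \<Rightarrow> nat) \<Rightarrow> 'f alg set \<Rightarrow> 'f pid set \<Rightarrow> bool" where
  "h_strong ar W \<Gamma> \<longleftrightarrow> (\<forall>e\<in>\<Gamma>. is_pid ar W e) \<and>
     (\<forall>A u v. is_pid ar W (A, u, v) \<and> (\<forall>T\<in>Mods ar W \<Gamma>. holds ar W T (A, u, v))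
        \<longrightarrow> (u, v) \<in> provable ar W \<Gamma> A)"

definition t_strong :: "('f \<Rightarrow> nat) \<Rightarrow> 'f alg set \<Rightarrow> 'f pid \<Rightarrow> bool" where
  "t_strong ar W e \<longleftrightarrow> is_pid ar W e \<and>
     (case e of (A, u, v) \<Rightarrow> \<forall>\<Gamma>. (\<forall>e'\<in>\<Gamma>. is_pid ar W e') \<and> (\<forall>T\<in>Mods ar W \<Gamma>. holds ar W T e)
        \<longrightarrow> (u, v) \<in> provable ar W \<Gamma> A)"

text \<open>The natural projection Omega_B U -> Omega_B V (V subset U): restriction of an
implicit operation on U to the members of V.\<close>
definition proj :: "'f alg set \<Rightarrow> nat set \<Rightarrow> 'f iop \<Rightarrow> 'f iop" where
  "proj V B u = restrict u (idx V B)"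

definition proj_set :: "'f alg set \<Rightarrow> 'f pid set \<Rightarrow> 'f pid set" where
  "proj_set V \<Gamma> = {(B, proj V B u, proj V B v) | B u v. (B, u, v) \<in> \<Gamma>}"

end

(* Write \<pi> for the restriction \<Omega>_A U \<rightarrow> \<Omega>_A V. Two implicit operations with the same image
   under \<pi> agree on every member of V = [[\<Sigma>]], so by h-strongness of \<Sigma> they are provable from
   \<Sigma>; and since every member of \<Sigma> is t-strong and holds in [[\<Gamma>]] \<subseteq> V, all of this is provable
   from \<Gamma>. Thus the kernel of \<pi> consists of \<Gamma>-provable pairs.
   A pseudoidentity u = v valid in [[\<Gamma>]]_U projects to one valid in [[\<Gamma>']]_V, which is therefore
   provable from \<Gamma>'. The image under \<pi> of the \<Gamma>-provable pairs is compact, hence closed; it contains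
   the basic pairs of \<Gamma>' because continuous homomorphisms \<Omega>_B V \<rightarrow> \<Omega>_A V lift along \<pi>, and
   it is transitive because of the kernel. So (\<pi> u, \<pi> v) = (\<pi> a, \<pi> b) with a = b provable from \<Gamma>,
   and the kernel closes the gaps u = a and b = v. *)

theory Submission
  imports Defs
begin

lemma pseudovariety_alg:
  assumes "pseudovariety ar W" "T \<in> W"
  shows "is_alg ar T"
proof -
  have "\<forall>T\<in>W. is_alg ar T" using assms(1) unfolding pseudovariety_def by (elim conjE) assumption
  then show ?thesis using assms(2) by blast
qed

lemma pseudovariety_subalg:
  assumes "pseudovariety ar W" "T \<in> W" "is_alg ar B" "is_subalg ar B T"
  shows "B \<in> W"
proof -
  have "\<forall>T B. T \<in> W \<and> is_alg ar B \<and> is_subalg ar B T \<longrightarrow> B \<in> W"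
    using assms(1) unfolding pseudovariety_def by (elim conjE) assumption
  then show ?thesis using assms(2-) by blast
qed

lemma pseudovariety_prod:
  assumes "pseudovariety ar W" "finite I" "\<And>i. i \<in> I \<Longrightarrow> As i \<in> W"
  shows "\<exists>C\<in>W. is_prod ar C I As"
proof -
  have "\<forall>I As. finite I \<and> (\<forall>i\<in>I. As i \<in> W) \<longrightarrow> (\<exists>C\<in>W. is_prod ar C I As)"
    using assms(1) unfolding pseudovariety_def by (elim conjE) assumption
  then show ?thesis using assms(2,3) by blast
qed

section \<open>Topology of the free pro-W algebras\<close>

lemma topspace_OmegaTop [simp]: "topspace (OmegaTop ar W A) = Omega ar W A"
  unfolding OmegaTop_def Omega_def by (auto simp: PiE_def)

lemma mem_idx_iff: "(T, a) \<in> idx W A \<longleftrightarrow> T \<in> W \<and> a \<in> A \<rightarrow>\<^sub>E fst T"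
  unfolding idx_def by auto

lemma Omega_extensional: "w \<in> Omega ar W A \<Longrightarrow> w \<in> extensional (idx W A)"
  unfolding Omega_def by auto

lemma Omega_in_carrier: "w \<in> Omega ar W A \<Longrightarrow> (T, a) \<in> idx W A \<Longrightarrow> w (T, a) \<in> fst T"
  unfolding Omega_def by blast

lemma Omega_natural:
  "w \<in> Omega ar W A \<Longrightarrow> T \<in> W \<Longrightarrow> T' \<in> W \<Longrightarrow> is_hom ar T T' h \<Longrightarrow> a \<in> A \<rightarrow>\<^sub>E fst T \<Longrightarrow>
   w (T', restrict (h \<circ> a) A) = h (w (T, a))"
  unfolding Omega_def by blast

lemma OmegaI:
  assumes "w \<in> extensional (idx W A)"
    and "\<And>T a. (T, a) \<in> idx W A \<Longrightarrow> w (T, a) \<in> fst T"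
    and "\<And>T T' h a. T \<in> W \<Longrightarrow> T' \<in> W \<Longrightarrow> is_hom ar T T' h \<Longrightarrow> a \<in> A \<rightarrow>\<^sub>E fst T \<Longrightarrow>
           w (T', restrict (h \<circ> a) A) = h (w (T, a))"
  shows "w \<in> Omega ar W A"
  unfolding Omega_def using assms by blast

lemma Omega_subset_topspace_product:
  "Omega ar W A \<subseteq> topspace (product_topology (\<lambda>_. discrete_topology (UNIV :: nat set)) (idx W A))"
  using Omega_extensional by (fastforce simp: PiE_def)

lemma openin_OmegaTop_cylinder:
  assumes "finite J" "J \<subseteq> idx W A"
  shows "openin (OmegaTop ar W A) {y \<in> Omega ar W A. \<forall>i\<in>J. y i = x i}"
proof -
  define X where "X i = (if i \<in> J then {x i} else (UNIV :: nat set))" for i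
  have "openin (product_topology (\<lambda>_. discrete_topology UNIV) (idx W A)) (PiE (idx W A) X)"
    by (rule product_topology_basis) (use assms in \<open>auto simp: X_def intro: finite_subset[of _ J]\<close>)
  moreover have "{y \<in> Omega ar W A. \<forall>i\<in>J. y i = x i} = PiE (idx W A) X \<inter> Omega ar W A"
    using assms(2) Omega_extensional by (fastforce simp: X_def PiE_iff extensional_def)
  ultimately show ?thesis
    unfolding OmegaTop_def by (simp add: openin_subtopology_Int)
qed

lemma openin_OmegaTop_contains_cylinder:
  assumes "openin (OmegaTop ar W A) N" "x \<in> N"
  obtains J where "finite J" "J \<subseteq> idx W A" "\<And>y. y \<in> Omega ar W A \<Longrightarrow> \<forall>i\<in>J. y i = x i \<Longrightarrow> y \<in> N"
proof -
  obtain N' where N': "openin (product_topology (\<lambda>_. discrete_topology (UNIV :: nat set)) (idx W A)) N'"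
    "N = N' \<inter> Omega ar W A"
    using assms(1) unfolding OmegaTop_def openin_subtopology by blast
  then obtain X where X: "finite {i \<in> idx W A. X i \<noteq> UNIV}" "x \<in> PiE (idx W A) X" "PiE (idx W A) X \<subseteq> N'"
    using assms(2) unfolding openin_product_topology_alt topspace_discrete_topology by blast
  have "y \<in> N" if y: "y \<in> Omega ar W A" "\<forall>i\<in>{i \<in> idx W A. X i \<noteq> UNIV}. y i = x i" for y
  proof -
    have "y \<in> PiE (idx W A) X"
      using X(2) y Omega_extensional[OF y(1)] by (fastforce simp: PiE_iff extensional_def)
    then show ?thesis using X(3) N'(2) y(1) by blast
  qed
  then show ?thesis using X(1) that[of "{i \<in> idx W A. X i \<noteq> UNIV}"] by blast
qed

lemma continuous_map_OmegaTop_discrete: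
  assumes into: "\<And>x. x \<in> Omega ar W A \<Longrightarrow> g x \<in> S"
    and locally_constant: "\<And>x. x \<in> Omega ar W A \<Longrightarrow>
      \<exists>J. finite J \<and> J \<subseteq> idx W A \<and> (\<forall>y\<in>Omega ar W A. (\<forall>i\<in>J. y i = x i) \<longrightarrow> g y = g x)"
  shows "continuous_map (OmegaTop ar W A) (discrete_topology S) g"
  unfolding continuous_map_def
proof (intro conjI allI impI)
  show "g \<in> topspace (OmegaTop ar W A) \<rightarrow> topspace (discrete_topology S)"
    using into by simp
  fix Y
  show "openin (OmegaTop ar W A) {x \<in> topspace (OmegaTop ar W A). g x \<in> Y}"
  proof (subst openin_subopen, intro ballI)
    fix x assume x: "x \<in> {x \<in> topspace (OmegaTop ar W A). g x \<in> Y}"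
    then have xO: "x \<in> Omega ar W A" by simp
    obtain J where J: "finite J" "J \<subseteq> idx W A" "\<forall>y\<in>Omega ar W A. (\<forall>i\<in>J. y i = x i) \<longrightarrow> g y = g x"
      using locally_constant[OF xO] by blast
    have "{y \<in> Omega ar W A. \<forall>i\<in>J. y i = x i} \<subseteq> {x \<in> topspace (OmegaTop ar W A). g x \<in> Y}"
    proof
      fix y assume y: "y \<in> {y \<in> Omega ar W A. \<forall>i\<in>J. y i = x i}"
      then have "g y = g x" using J(3) by blast
      then show "y \<in> {x \<in> topspace (OmegaTop ar W A). g x \<in> Y}" using x y by simp
    qed
    then show "\<exists>N. openin (OmegaTop ar W A) N \<and> x \<in> N \<and> N \<subseteq> {x \<in> topspace (OmegaTop ar W A). g x \<in> Y}"
      using openin_OmegaTop_cylinder[OF J(1,2), of ar x] xO by blast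
  qed
qed

lemma continuous_map_OmegaTop_coordinatewise:
  assumes into: "\<And>x. x \<in> Omega ar W A \<Longrightarrow> f x \<in> Omega ar W' A'"
    and depends: "\<And>k. k \<in> idx W' A' \<Longrightarrow>
      \<exists>j\<in>idx W A. \<forall>x\<in>Omega ar W A. \<forall>y\<in>Omega ar W A. x j = y j \<longrightarrow> f x k = f y k"
  shows "continuous_map (OmegaTop ar W A) (OmegaTop ar W' A') f"
proof -
  have "continuous_map (OmegaTop ar W A) (discrete_topology UNIV) (\<lambda>x. f x k)" if k: "k \<in> idx W' A'" for k
  proof (rule continuous_map_OmegaTop_discrete)
    fix x assume x: "x \<in> Omega ar W A"
    show "f x k \<in> UNIV" by simp
    obtain j where j: "j \<in> idx W A" and j_dep: "\<And>y. y \<in> Omega ar W A \<Longrightarrow> y j = x j \<Longrightarrow> f y k = f x k"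
      using depends[OF k] x by metis
    show "\<exists>J. finite J \<and> J \<subseteq> idx W A \<and> (\<forall>y\<in>Omega ar W A. (\<forall>i\<in>J. y i = x i) \<longrightarrow> f y k = f x k)"
      using j j_dep by (intro exI[of _ "{j}"]) simp
  qed
  then have "continuous_map (OmegaTop ar W A) (product_topology (\<lambda>_. discrete_topology UNIV) (idx W' A')) f"
    using Omega_extensional[OF into] by (auto simp: continuous_map_componentwise)
  then show ?thesis
    unfolding OmegaTop_def by (rule continuous_map_into_subtopology) (use into in auto)
qed

lemma continuous_map_OmegaTop_eval:
  assumes "(T, a) \<in> idx W A"
  shows "continuous_map (OmegaTop ar W A) (discrete_topology (fst T)) (\<lambda>z. z (T, a))"
proof (rule continuous_map_OmegaTop_discrete)
  fix x assume x: "x \<in> Omega ar W A"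
  show "x (T, a) \<in> fst T" using Omega_in_carrier[OF x assms] .
  show "\<exists>J. finite J \<and> J \<subseteq> idx W A \<and> (\<forall>y\<in>Omega ar W A. (\<forall>i\<in>J. y i = x i) \<longrightarrow> y (T, a) = x (T, a))"
    using assms by (intro exI[of _ "{(T, a)}"]) simp
qed

lemma closure_Omega_agrees_on_finite:
  assumes w: "w \<in> product_topology (\<lambda>_. discrete_topology (UNIV :: nat set)) (idx W A) closure_of Omega ar W A"
    and J: "finite J" "J \<subseteq> idx W A"
  obtains y where "y \<in> Omega ar W A" "\<And>i. i \<in> J \<Longrightarrow> y i = w i"
proof -
  let ?P = "product_topology (\<lambda>_. discrete_topology (UNIV :: nat set)) (idx W A)"
  define X where "X i = (if i \<in> J then {w i} else (UNIV :: nat set))" for i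
  have "openin ?P (PiE (idx W A) X)"
    by (rule product_topology_basis) (use J in \<open>auto simp: X_def intro: finite_subset[of _ J]\<close>)
  moreover have "w \<in> topspace ?P" using closure_of_subset_topspace w by (rule subsetD)
  then have "w \<in> PiE (idx W A) X" by (auto simp: X_def PiE_iff)
  ultimately obtain y where y: "y \<in> Omega ar W A" "y \<in> PiE (idx W A) X"
    using w unfolding in_closure_of by blast
  have "y i = w i" if "i \<in> J" for i
  proof -
    have "y i \<in> X i" using PiE_mem[OF y(2)] that J(2) by blast
    then show ?thesis using that by (simp add: X_def)
  qed
  then show ?thesis using that y(1) by blast
qed

lemma closedin_Omega:
  "closedin (product_topology (\<lambda>_. discrete_topology (UNIV :: nat set)) (idx W A)) (Omega ar W A)"
proof -
  let ?P = "product_topology (\<lambda>_. discrete_topology (UNIV :: nat set)) (idx W A)"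
  have "w \<in> Omega ar W A" if w: "w \<in> ?P closure_of Omega ar W A" for w
  proof (rule OmegaI)
    have "w \<in> topspace ?P" using closure_of_subset_topspace w by (rule subsetD)
    then show "w \<in> extensional (idx W A)" by (simp add: PiE_def)
  next
    fix T a assume Ta: "(T, a) \<in> idx W A"
    then obtain y where "y \<in> Omega ar W A" "\<And>i. i \<in> {(T, a)} \<Longrightarrow> y i = w i"
      using closure_Omega_agrees_on_finite[OF w, of "{(T, a)}"] by blast
    then show "w (T, a) \<in> fst T" using Omega_in_carrier Ta by fastforce
  next
    fix T T' h a assume T: "T \<in> W" "T' \<in> W" "is_hom ar T T' h" "a \<in> A \<rightarrow>\<^sub>E fst T"
    have "restrict (h \<circ> a) A \<in> A \<rightarrow>\<^sub>E fst T'"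
      using T(3,4) unfolding is_hom_def by (auto simp: PiE_def Pi_def)
    then have J: "{(T, a), (T', restrict (h \<circ> a) A)} \<subseteq> idx W A"
      using T by (simp add: mem_idx_iff)
    obtain y where y: "y \<in> Omega ar W A"
      and yw: "\<And>i. i \<in> {(T, a), (T', restrict (h \<circ> a) A)} \<Longrightarrow> y i = w i"
      using closure_Omega_agrees_on_finite[OF w _ J] by blast
    have "y (T', restrict (h \<circ> a) A) = h (y (T, a))" by (rule Omega_natural[OF y T])
    then show "w (T', restrict (h \<circ> a) A) = h (w (T, a))" using yw by simp
  qed
  then show ?thesis
    using Omega_subset_topspace_product closure_of_subset_eq by blast
qed

lemma compact_space_OmegaTop:
  assumes pv: "pseudovariety ar W"
  shows "compact_space (OmegaTop ar W A)"
proof -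
  let ?P = "product_topology (\<lambda>_. discrete_topology (UNIV :: nat set)) (idx W A)"
  have "finite (fst (fst i))" if "i \<in> idx W A" for i
    using that pseudovariety_alg[OF pv] by (auto simp: idx_def is_alg_def)
  then have "compactin ?P (PiE (idx W A) (\<lambda>i. fst (fst i)))"
    by (simp add: compactin_PiE finite_imp_compactin)
  moreover have "Omega ar W A \<subseteq> PiE (idx W A) (\<lambda>i. fst (fst i))"
  proof
    fix w assume w: "w \<in> Omega ar W A"
    show "w \<in> PiE (idx W A) (\<lambda>i. fst (fst i))"
      using Omega_in_carrier[OF w] Omega_extensional[OF w] by (auto simp: PiE_iff)
  qed
  ultimately have "compactin ?P (Omega ar W A)"
    using closedin_Omega closed_compactin by blast
  then show ?thesis
    unfolding OmegaTop_def by (rule compact_space_subtopology)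
qed

lemma Hausdorff_space_OmegaTop: "Hausdorff_space (OmegaTop ar W A)"
  unfolding OmegaTop_def
  by (intro Hausdorff_space_subtopology) (simp add: Hausdorff_space_product_topology)

section \<open>Implicit operations evaluated in finite algebras\<close>

lemma restrict_hom_comp_PiE:
  "is_hom ar T T' h \<Longrightarrow> a \<in> A \<rightarrow>\<^sub>E fst T \<Longrightarrow> restrict (h \<circ> a) A \<in> A \<rightarrow>\<^sub>E fst T'"
  unfolding is_hom_def by (auto simp: PiE_def Pi_def)

lemma omop_at: "(T, a) \<in> idx W A \<Longrightarrow> omop W A f ws (T, a) = snd T f (map (\<lambda>w. w (T, a)) ws)"
  unfolding omop_def by simp

lemma omop_Omega:
  assumes pv: "pseudovariety ar W" and ws: "set ws \<subseteq> Omega ar W A" and len: "length ws = ar f"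
  shows "omop W A f ws \<in> Omega ar W A"
proof (rule OmegaI)
  show "omop W A f ws \<in> extensional (idx W A)"
    unfolding omop_def by (rule restrict_extensional)
next
  fix T a assume Ta: "(T, a) \<in> idx W A"
  then have "is_alg ar T" using pseudovariety_alg[OF pv] by (simp add: mem_idx_iff)
  moreover have "set (map (\<lambda>w. w (T, a)) ws) \<subseteq> fst T" using ws Omega_in_carrier[OF _ Ta] by auto
  ultimately show "omop W A f ws (T, a) \<in> fst T"
    unfolding omop_at[OF Ta] using len by (simp add: is_alg_def)
next
  fix T T' h a assume T: "T \<in> W" "T' \<in> W" "is_hom ar T T' h" "a \<in> A \<rightarrow>\<^sub>E fst T"
  have Ta: "(T, a) \<in> idx W A" and Ta': "(T', restrict (h \<circ> a) A) \<in> idx W A"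
    using T restrict_hom_comp_PiE[OF T(3,4)] by (simp_all add: mem_idx_iff)
  have "set (map (\<lambda>w. w (T, a)) ws) \<subseteq> fst T" using ws Omega_in_carrier[OF _ Ta] by auto
  then have hom: "h (snd T f (map (\<lambda>w. w (T, a)) ws)) = snd T' f (map h (map (\<lambda>w. w (T, a)) ws))"
    using T(3) len unfolding is_hom_def by simp
  have natural: "map (\<lambda>w. w (T', restrict (h \<circ> a) A)) ws = map h (map (\<lambda>w. w (T, a)) ws)"
    using ws Omega_natural[OF _ T] by auto
  show "omop W A f ws (T', restrict (h \<circ> a) A) = h (omop W A f ws (T, a))"
    unfolding omop_at[OF Ta] omop_at[OF Ta'] natural hom ..
qed

lemma teval_Omega:
  assumes pv: "pseudovariety ar W"
  shows "set env \<subseteq> Omega ar W A \<Longrightarrow> wf_trm ar (length env) t \<Longrightarrow> teval W A env t \<in> Omega ar W A"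
  by (induction t) (auto intro!: omop_Omega[OF pv])

definition generator :: "'f alg set \<Rightarrow> nat set \<Rightarrow> nat \<Rightarrow> 'f iop" where
  "generator W A b = restrict (\<lambda>i. snd i b) (idx W A)"

lemma generator_at: "(T, a) \<in> idx W A \<Longrightarrow> generator W A b (T, a) = a b"
  unfolding generator_def by simp

lemma generator_Omega:
  assumes "b \<in> A"
  shows "generator W A b \<in> Omega ar W A"
proof (rule OmegaI)
  show "generator W A b \<in> extensional (idx W A)"
    unfolding generator_def by (rule restrict_extensional)
next
  fix T a assume "(T, a) \<in> idx W A"
  then show "generator W A b (T, a) \<in> fst T" using assms by (auto simp: generator_at mem_idx_iff)
next
  fix T T' h a assume T: "T \<in> W" "T' \<in> W" "is_hom ar T T' h" "a \<in> A \<rightarrow>\<^sub>E fst T"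
  then show "generator W A b (T', restrict (h \<circ> a) A) = h (generator W A b (T, a))"
    using assms restrict_hom_comp_PiE[OF T(3,4)] by (simp add: generator_at mem_idx_iff)
qed

lemma Omega_natural_idx:
  assumes "w \<in> Omega ar W A" "C \<in> W" "c \<in> A \<rightarrow>\<^sub>E fst C" "k \<in> idx W A"
    and "is_hom ar C (fst k) h" "restrict (h \<circ> c) A = snd k"
  shows "w k = h (w (C, c))"
  using assms Omega_natural[OF assms(1,2) _ assms(5,3)] by (cases k) (auto simp: mem_idx_iff)

lemma is_prod_projections:
  assumes "is_prod ar C I As"
  obtains p where "p ` fst C = PiE I (\<lambda>i. fst (As i))"
    "\<And>i. i \<in> I \<Longrightarrow> is_hom ar C (As i) (\<lambda>x. p x i)"
proof -
  obtain p where p: "bij_betw p (fst C) (PiE I (\<lambda>i. fst (As i)))"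
    and op: "\<forall>f xs. length xs = ar f \<and> set xs \<subseteq> fst C \<longrightarrow>
               p (snd C f xs) = (\<lambda>i\<in>I. snd (As i) f (map (\<lambda>x. p x i) xs))"
    using assms unfolding is_prod_def by blast
  have "is_hom ar C (As i) (\<lambda>x. p x i)" if "i \<in> I" for i
    unfolding is_hom_def using that op bij_betw_apply[OF p] by (auto simp: PiE_iff)
  then show ?thesis using that p by (auto simp: bij_betw_def)
qed

lemma pseudovariety_dominating_product:
  assumes pv: "pseudovariety ar W" and F: "finite F" "F \<subseteq> idx W A"
  obtains C c H where "C \<in> W" "c \<in> A \<rightarrow>\<^sub>E fst C"
    "\<And>k. k \<in> F \<Longrightarrow> is_hom ar C (fst k) (H k) \<and> restrict (H k \<circ> c) A = snd k"
proof -
  define I where "I = {0..<card F}"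
  obtain g where g: "bij_betw g I F" using ex_bij_betw_nat_finite[OF F(1)] unfolding I_def by blast
  define As where "As i = fst (g i)" for i
  have gi: "As i \<in> W" "snd (g i) \<in> A \<rightarrow>\<^sub>E fst (As i)" if "i \<in> I" for i
  proof -
    have "g i \<in> idx W A" using bij_betw_apply[OF g that] F(2) by blast
    then show "As i \<in> W" "snd (g i) \<in> A \<rightarrow>\<^sub>E fst (As i)"
      unfolding As_def by (cases "g i", simp_all add: mem_idx_iff)+
  qed
  have "finite I" by (simp add: I_def)
  then obtain C where C: "C \<in> W" "is_prod ar C I As"
    using pseudovariety_prod[OF pv, of I As] gi(1) by blast
  obtain p where p_onto: "p ` fst C = PiE I (\<lambda>i. fst (As i))"
    and p_hom: "\<And>i. i \<in> I \<Longrightarrow> is_hom ar C (As i) (\<lambda>x. p x i)"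
    using is_prod_projections[OF C(2)] by blast
  define c where "c = restrict (\<lambda>b. inv_into (fst C) p (\<lambda>i\<in>I. snd (g i) b)) A"
  define H where "H k = (\<lambda>x. p x (inv_into I g k))" for k
  have tuple: "(\<lambda>i\<in>I. snd (g i) b) \<in> p ` fst C" if "b \<in> A" for b
    using gi(2) that unfolding p_onto by auto
  have p_c: "p (c b) = (\<lambda>i\<in>I. snd (g i) b)" if "b \<in> A" for b
    using f_inv_into_f[OF tuple[OF that]] that by (simp add: c_def)
  have c: "c \<in> A \<rightarrow>\<^sub>E fst C"
    using inv_into_into[OF tuple] by (auto simp: c_def)
  have "is_hom ar C (fst k) (H k) \<and> restrict (H k \<circ> c) A = snd k" if k: "k \<in> F" for k
  proof
    let ?i = "inv_into I g k"
    have i: "?i \<in> I" "g ?i = k"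
      using k g by (auto simp: bij_betw_def inv_into_into f_inv_into_f)
    show "is_hom ar C (fst k) (H k)" using p_hom[OF i(1)] i(2) by (simp add: H_def As_def)
    show "restrict (H k \<circ> c) A = snd k"
    proof
      fix b
      show "restrict (H k \<circ> c) A b = snd k b"
        using p_c i gi(2)[OF i(1)] by (cases "b \<in> A") (auto simp: H_def)
    qed
  qed
  then show ?thesis using that C(1) c by blast
qed

lemma list_in_image_obtain:
  assumes "set xs \<subseteq> f ` S"
  obtains ys where "set ys \<subseteq> S" "xs = map f ys"
proof -
  have "xs \<in> map f ` lists S" using assms by (simp add: lists_image[symmetric] in_lists_conv_set subset_iff)
  then show thesis using that by (auto simp: in_lists_conv_set)
qed

text \<open>The subalgebra of C generated by the entries of c.\<close>
definition eval_subalg :: "('f \<Rightarrow> nat) \<Rightarrow> 'f alg set \<Rightarrow> nat set \<Rightarrow> 'f alg \<Rightarrow> (nat \<Rightarrow> nat) \<Rightarrow> 'f alg" where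
  "eval_subalg ar U A C c = ((\<lambda>w. w (C, c)) ` Omega ar U A, snd C)"

lemma eval_subalg_in_pseudovariety:
  assumes pvU: "pseudovariety ar U" and pvV: "pseudovariety ar V" and VU: "V \<subseteq> U"
    and C: "C \<in> V" and c: "c \<in> A \<rightarrow>\<^sub>E fst C" and ne: "Omega ar U A \<noteq> {}"
  shows "eval_subalg ar U A C c \<in> V" and "c \<in> A \<rightarrow>\<^sub>E fst (eval_subalg ar U A C c)"
    and "\<And>w. w \<in> Omega ar V A \<Longrightarrow> w (eval_subalg ar U A C c, c) = w (C, c)"
proof -
  let ?Q = "eval_subalg ar U A C c"
  have CU: "(C, c) \<in> idx U A" using C VU c by (auto simp: mem_idx_iff)
  have sub: "fst ?Q \<subseteq> fst C" using Omega_in_carrier[OF _ CU] by (auto simp: eval_subalg_def)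
  have algC: "is_alg ar C" using pseudovariety_alg[OF pvV C] .
  have "is_alg ar ?Q"
    unfolding is_alg_def
  proof (intro conjI allI impI)
    show "finite (fst ?Q)" using sub algC finite_subset by (auto simp: is_alg_def)
    show "fst ?Q \<noteq> {}" using ne by (simp add: eval_subalg_def)
    fix f xs assume fx: "length xs = ar f \<and> set xs \<subseteq> fst ?Q"
    then obtain ws where ws: "set ws \<subseteq> Omega ar U A" "xs = map (\<lambda>w. w (C, c)) ws"
      by (auto simp: eval_subalg_def elim: list_in_image_obtain)
    then have "snd ?Q f xs = omop U A f ws (C, c)" by (simp add: omop_at[OF CU] eval_subalg_def)
    moreover have "omop U A f ws \<in> Omega ar U A" using omop_Omega[OF pvU ws(1)] fx ws(2) by simp
    ultimately show "snd ?Q f xs \<in> fst ?Q" by (simp add: eval_subalg_def)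
  qed
  moreover have "is_subalg ar ?Q C" using sub by (simp add: is_subalg_def eval_subalg_def)
  ultimately show Q: "?Q \<in> V" using pseudovariety_subalg[OF pvV C] by blast
  show cQ: "c \<in> A \<rightarrow>\<^sub>E fst ?Q"
  proof (rule PiE_I)
    fix b assume b: "b \<in> A"
    have "c b = generator U A b (C, c)" using generator_at[OF CU] by simp
    then show "c b \<in> fst ?Q" using generator_Omega[OF b] by (auto simp: eval_subalg_def)
  next
    fix b assume "b \<notin> A"
    then show "c b = undefined" by (rule PiE_arb[OF c])
  qed
  have hom: "is_hom ar ?Q C id" using sub by (auto simp: is_hom_def eval_subalg_def)
  have "restrict (id \<circ> c) A = c" using c by (simp add: PiE_def extensional_restrict)
  then show "w (?Q, c) = w (C, c)" if "w \<in> Omega ar V A" for w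
    using Omega_natural[OF that Q C hom cQ] by simp
qed

lemma continuous_map_discrete_finite_dependence:
  assumes pv: "pseudovariety ar W"
    and cont: "continuous_map (OmegaTop ar W A) (discrete_topology S) \<psi>"
  obtains F where "finite F" "F \<subseteq> idx W A"
    "\<And>x y. x \<in> Omega ar W A \<Longrightarrow> y \<in> Omega ar W A \<Longrightarrow> (\<forall>i\<in>F. x i = y i) \<Longrightarrow> \<psi> x = \<psi> y"
proof -
  have "\<exists>J. finite J \<and> J \<subseteq> idx W A \<and> (\<forall>y\<in>Omega ar W A. (\<forall>i\<in>J. y i = x i) \<longrightarrow> \<psi> y = \<psi> x)"
    if x: "x \<in> Omega ar W A" for x
  proof -
    have "\<psi> x \<in> S" using continuous_map_funspace[OF cont] x by auto
    then have "openin (OmegaTop ar W A) {z \<in> topspace (OmegaTop ar W A). \<psi> z \<in> {\<psi> x}}"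
      by (intro openin_continuous_map_preimage[OF cont]) simp
    then obtain J where "finite J" "J \<subseteq> idx W A"
        "\<And>y. y \<in> Omega ar W A \<Longrightarrow> \<forall>i\<in>J. y i = x i \<Longrightarrow> \<psi> y = \<psi> x"
      by (rule openin_OmegaTop_contains_cylinder) (use x in auto)
    then show ?thesis by blast
  qed
  then obtain Jf where Jf: "\<And>x. x \<in> Omega ar W A \<Longrightarrow> finite (Jf x) \<and> Jf x \<subseteq> idx W A \<and>
      (\<forall>y\<in>Omega ar W A. (\<forall>i\<in>Jf x. y i = x i) \<longrightarrow> \<psi> y = \<psi> x)"
    by metis
  define cyl where "cyl x = {y \<in> Omega ar W A. \<forall>i\<in>Jf x. y i = x i}" for x
  have "\<forall>N\<in>cyl ` Omega ar W A. openin (OmegaTop ar W A) N"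
    using openin_OmegaTop_cylinder Jf unfolding cyl_def by blast
  moreover have "\<Union> (cyl ` Omega ar W A) = topspace (OmegaTop ar W A)"
    unfolding cyl_def by auto
  ultimately obtain \<F> where \<F>: "finite \<F>" "\<F> \<subseteq> cyl ` Omega ar W A" "\<Union>\<F> = Omega ar W A"
    using compact_space_OmegaTop[OF pv] unfolding compact_space by (metis topspace_OmegaTop)
  then obtain X0 where X0: "finite X0" "X0 \<subseteq> Omega ar W A" "\<Union> (cyl ` X0) = Omega ar W A"
    by (metis finite_subset_image)
  show ?thesis
  proof
    show "finite (\<Union> (Jf ` X0))" "\<Union> (Jf ` X0) \<subseteq> idx W A" using X0 Jf by auto
    fix x y assume x: "x \<in> Omega ar W A" and y: "y \<in> Omega ar W A"
      and xy: "\<forall>i\<in>\<Union> (Jf ` X0). x i = y i"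
    obtain x0 where x0: "x0 \<in> X0" "x \<in> cyl x0" using X0(3) x by blast
    then have x0O: "x0 \<in> Omega ar W A" using X0(2) by blast
    have "\<forall>i\<in>Jf x0. x i = x0 i" using x0(2) unfolding cyl_def by blast
    moreover have "\<forall>i\<in>Jf x0. y i = x0 i" using calculation xy x0(1) by auto
    ultimately show "\<psi> x = \<psi> y" using Jf[OF x0O] x y by metis
  qed
qed

lemma alg_hom_to_continuous:
  "alg_hom_to ar W A T \<psi> \<Longrightarrow> continuous_map (OmegaTop ar W A) (discrete_topology (fst T)) \<psi>"
  unfolding alg_hom_to_def by blast

lemma alg_hom_to_omop:
  "alg_hom_to ar W A T \<psi> \<Longrightarrow> length ws = ar f \<Longrightarrow> set ws \<subseteq> Omega ar W A \<Longrightarrow>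
   \<psi> (omop W A f ws) = snd T f (map \<psi> ws)"
  unfolding alg_hom_to_def by simp

lemma alg_hom_to_in_carrier: "alg_hom_to ar W A T \<psi> \<Longrightarrow> w \<in> Omega ar W A \<Longrightarrow> \<psi> w \<in> fst T"
  using continuous_map_funspace[OF alg_hom_to_continuous] by fastforce

lemma alg_hom_to_eval: "(T, a) \<in> idx W A \<Longrightarrow> alg_hom_to ar W A T (\<lambda>z. z (T, a))"
  unfolding alg_hom_to_def by (simp add: continuous_map_OmegaTop_eval omop_at)

lemma alg_hom_to_factors_through_eval:
  assumes pv: "pseudovariety ar W" and psi: "alg_hom_to ar W A T \<psi>"
    and C: "C \<in> W" "c \<in> A \<rightarrow>\<^sub>E fst C" and ne: "Omega ar W A \<noteq> {}"
    and dep: "\<And>x y. x \<in> Omega ar W A \<Longrightarrow> y \<in> Omega ar W A \<Longrightarrow> x (C, c) = y (C, c) \<Longrightarrow> \<psi> x = \<psi> y"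
  obtains g where "is_hom ar (eval_subalg ar W A C c) T g"
    "\<And>x. x \<in> Omega ar W A \<Longrightarrow> g (x (C, c)) = \<psi> x"
proof
  define g where "g q = \<psi> (SOME x. x \<in> Omega ar W A \<and> x (C, c) = q)" for q
  show g: "g (x (C, c)) = \<psi> x" if x: "x \<in> Omega ar W A" for x
  proof -
    have "\<exists>z. z \<in> Omega ar W A \<and> z (C, c) = x (C, c)" using x by blast
    then show ?thesis unfolding g_def by (metis (mono_tags, lifting) someI_ex dep x)
  qed
  have CW: "(C, c) \<in> idx W A" using C by (simp add: mem_idx_iff)
  show "is_hom ar (eval_subalg ar W A C c) T g"
    unfolding is_hom_def
  proof (intro conjI allI impI)
    show "g \<in> fst (eval_subalg ar W A C c) \<rightarrow> fst T"
      using g alg_hom_to_in_carrier[OF psi] by (auto simp: eval_subalg_def)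
    fix f xs assume fx: "length xs = ar f \<and> set xs \<subseteq> fst (eval_subalg ar W A C c)"
    then obtain ws where ws: "set ws \<subseteq> Omega ar W A" "xs = map (\<lambda>w. w (C, c)) ws"
      by (auto simp: eval_subalg_def elim: list_in_image_obtain)
    have len: "length ws = ar f" using fx ws(2) by simp
    have "g (snd (eval_subalg ar W A C c) f xs) = g (omop W A f ws (C, c))"
      by (simp add: eval_subalg_def ws(2) omop_at[OF CW])
    also have "\<dots> = \<psi> (omop W A f ws)" by (rule g[OF omop_Omega[OF pv ws(1) len]])
    also have "\<dots> = snd T f (map g xs)"
    proof -
      have "map g xs = map \<psi> ws"
        unfolding ws(2) map_map using ws(1) g by (intro map_cong) auto
      then show ?thesis using alg_hom_to_omop[OF psi len ws(1)] by simp
    qed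
    finally show "g (snd (eval_subalg ar W A C c) f xs) = snd T f (map g xs)" .
  qed
qed

text \<open>A continuous homomorphism depends on finitely many coordinates; a single algebra of the
pseudovariety dominates them, and the homomorphism factors through evaluation there.\<close>
lemma alg_hom_to_eq_eval_generators:
  assumes pv: "pseudovariety ar W" and T: "T \<in> W" and psi: "alg_hom_to ar W A T \<psi>"
    and w: "w \<in> Omega ar W A"
  shows "\<psi> w = w (T, restrict (\<lambda>b. \<psi> (generator W A b)) A)"
proof -
  obtain F where F: "finite F" "F \<subseteq> idx W A"
    and F_dep: "\<And>x y. x \<in> Omega ar W A \<Longrightarrow> y \<in> Omega ar W A \<Longrightarrow> (\<forall>i\<in>F. x i = y i) \<Longrightarrow> \<psi> x = \<psi> y"
    using continuous_map_discrete_finite_dependence[OF pv alg_hom_to_continuous[OF psi]] by blast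
  obtain C c H where C: "C \<in> W" "c \<in> A \<rightarrow>\<^sub>E fst C"
    and H: "\<And>k. k \<in> F \<Longrightarrow> is_hom ar C (fst k) (H k) \<and> restrict (H k \<circ> c) A = snd k"
    using pseudovariety_dominating_product[OF pv F] by blast
  have ne: "Omega ar W A \<noteq> {}" using w by blast
  have agree: "z k = H k (z (C, c))" if "z \<in> Omega ar W A" "k \<in> F" for z k
    using Omega_natural_idx[OF that(1) C _ conjunct1[OF H[OF that(2)]] conjunct2[OF H[OF that(2)]]]
      that(2) F(2) by blast
  have "\<psi> x = \<psi> y" if "x \<in> Omega ar W A" "y \<in> Omega ar W A" "x (C, c) = y (C, c)" for x y
    using agree[OF that(1)] agree[OF that(2)] that by (intro F_dep) simp_all
  then obtain g where g_hom: "is_hom ar (eval_subalg ar W A C c) T g"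
    and g: "\<And>x. x \<in> Omega ar W A \<Longrightarrow> g (x (C, c)) = \<psi> x"
    using alg_hom_to_factors_through_eval[OF pv psi C ne] by blast
  note Q = eval_subalg_in_pseudovariety[OF pv pv subset_refl C ne]
  have CW: "(C, c) \<in> idx W A" using C by (simp add: mem_idx_iff)
  have "restrict (g \<circ> c) A = restrict (\<lambda>b. \<psi> (generator W A b)) A"
    using g[OF generator_Omega] generator_at[OF CW] by (auto intro: restrict_ext)
  moreover have "\<psi> w = g (w (eval_subalg ar W A C c, c))" using g[OF w] Q(3)[OF w] by simp
  ultimately show ?thesis using Omega_natural[OF w Q(1) T g_hom Q(2)] by simp
qed

section \<open>Projection onto a subpseudovariety\<close>

lemma idx_mono: "V \<subseteq> U \<Longrightarrow> idx V A \<subseteq> idx U A"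
  unfolding idx_def by auto

lemma proj_at: "k \<in> idx V A \<Longrightarrow> proj V A u k = u k"
  unfolding proj_def by simp

lemma proj_Omega:
  assumes VU: "V \<subseteq> U" and u: "u \<in> Omega ar U A"
  shows "proj V A u \<in> Omega ar V A"
proof (rule OmegaI)
  show "proj V A u \<in> extensional (idx V A)" unfolding proj_def by (rule restrict_extensional)
next
  fix T a assume Ta: "(T, a) \<in> idx V A"
  then have "(T, a) \<in> idx U A" using idx_mono[OF VU] by blast
  then show "proj V A u (T, a) \<in> fst T" unfolding proj_at[OF Ta] by (rule Omega_in_carrier[OF u])
next
  fix T T' h a assume T: "T \<in> V" "T' \<in> V" "is_hom ar T T' h" "a \<in> A \<rightarrow>\<^sub>E fst T"
  have Ta: "(T, a) \<in> idx V A" and Ta': "(T', restrict (h \<circ> a) A) \<in> idx V A"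
    using T restrict_hom_comp_PiE[OF T(3,4)] by (simp_all add: mem_idx_iff)
  have "u (T', restrict (h \<circ> a) A) = h (u (T, a))" using Omega_natural[OF u _ _ T(3,4)] T(1,2) VU by blast
  then show "proj V A u (T', restrict (h \<circ> a) A) = h (proj V A u (T, a))"
    unfolding proj_at[OF Ta] proj_at[OF Ta'] .
qed

lemma proj_omop:
  assumes "V \<subseteq> U"
  shows "proj V A (omop U A f ws) = omop V A f (map (proj V A) ws)"
proof
  fix k
  show "proj V A (omop U A f ws) k = omop V A f (map (proj V A) ws) k"
    using idx_mono[OF assms] by (cases "k \<in> idx V A") (auto simp: proj_def omop_def o_def)
qed

lemma continuous_map_proj:
  assumes VU: "V \<subseteq> U"
  shows "continuous_map (OmegaTop ar U A) (OmegaTop ar V A) (proj V A)"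
proof (rule continuous_map_OmegaTop_coordinatewise)
  show "proj V A x \<in> Omega ar V A" if "x \<in> Omega ar U A" for x by (rule proj_Omega[OF VU that])
  fix k assume k: "k \<in> idx V A"
  then have "\<forall>x\<in>Omega ar U A. \<forall>y\<in>Omega ar U A. x k = y k \<longrightarrow> proj V A x k = proj V A y k"
    by (simp add: proj_at)
  then show "\<exists>j\<in>idx U A. \<forall>x\<in>Omega ar U A. \<forall>y\<in>Omega ar U A. x j = y j \<longrightarrow> proj V A x k = proj V A y k"
    using k idx_mono[OF VU] by blast
qed

lemma proj_image_Omega:
  assumes pvU: "pseudovariety ar U" and pvV: "pseudovariety ar V" and VU: "V \<subseteq> U"
    and ne: "Omega ar U A \<noteq> {}"
  shows "proj V A ` Omega ar U A = Omega ar V A"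
proof
  show "proj V A ` Omega ar U A \<subseteq> Omega ar V A" using proj_Omega[OF VU] by blast
  let ?Im = "proj V A ` Omega ar U A"
  have "compactin (OmegaTop ar V A) ?Im"
    using compact_space_OmegaTop[OF pvU] continuous_map_proj[OF VU]
    by (metis compact_space_def image_compactin topspace_OmegaTop)
  then have closed: "closedin (OmegaTop ar V A) ?Im"
    using Hausdorff_space_OmegaTop compactin_imp_closedin by blast
  have "x \<in> OmegaTop ar V A closure_of ?Im" if x: "x \<in> Omega ar V A" for x
    unfolding in_closure_of
  proof (intro conjI allI impI)
    show "x \<in> topspace (OmegaTop ar V A)" using x by simp
    fix N assume N: "x \<in> N \<and> openin (OmegaTop ar V A) N"
    obtain J where J: "finite J" "J \<subseteq> idx V A"
      and J_N: "\<And>y. y \<in> Omega ar V A \<Longrightarrow> \<forall>i\<in>J. y i = x i \<Longrightarrow> y \<in> N"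
      using openin_OmegaTop_contains_cylinder[of ar V A N x] N by blast
    obtain C c H where C: "C \<in> V" "c \<in> A \<rightarrow>\<^sub>E fst C"
      and H: "\<And>k. k \<in> J \<Longrightarrow> is_hom ar C (fst k) (H k) \<and> restrict (H k \<circ> c) A = snd k"
      using pseudovariety_dominating_product[OF pvV J] by blast
    note Q = eval_subalg_in_pseudovariety[OF pvU pvV VU C ne]
    have "x (C, c) \<in> fst (eval_subalg ar U A C c)"
      using Q Q(3)[OF x] Omega_in_carrier[OF x, of "eval_subalg ar U A C c" c] by (simp add: mem_idx_iff)
    then obtain y where y: "y \<in> Omega ar U A" "y (C, c) = x (C, c)"
      unfolding eval_subalg_def by auto
    have "proj V A y k = x k" if k: "k \<in> J" for k
      using Omega_natural_idx[OF y(1) _ C(2) _ conjunct1[OF H[OF k]] conjunct2[OF H[OF k]]]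
        Omega_natural_idx[OF x C _ conjunct1[OF H[OF k]] conjunct2[OF H[OF k]]]
        k J(2) C(1) VU idx_mono[OF VU] y(2) proj_at
      by (metis subsetD)
    then have "proj V A y \<in> N" using J_N proj_Omega[OF VU y(1)] by blast
    then show "\<exists>y. y \<in> ?Im \<and> y \<in> N" using y(1) by blast
  qed
  then show "Omega ar V A \<subseteq> ?Im" using closure_of_closedin[OF closed] by blast
qed

lemma holds_iff: "holds ar W T (B, u, v) \<longleftrightarrow> (\<forall>\<psi>. alg_hom_to ar W B T \<psi> \<longrightarrow> \<psi> u = \<psi> v)"
  by (simp add: holds_def)

lemma holds_proj_iff:
  assumes pvU: "pseudovariety ar U" and VU: "V \<subseteq> U" and T: "T \<in> V"
    and u: "u \<in> Omega ar U B" and v: "v \<in> Omega ar U B"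
  shows "holds ar V T (B, proj V B u, proj V B v) \<longleftrightarrow> holds ar U T (B, u, v)"
proof
  assume hV: "holds ar V T (B, proj V B u, proj V B v)"
  show "holds ar U T (B, u, v)"
    unfolding holds_iff
  proof (intro allI impI)
    fix \<psi> assume psi: "alg_hom_to ar U B T \<psi>"
    define a where "a = restrict (\<lambda>b. \<psi> (generator U B b)) B"
    have Ta: "(T, a) \<in> idx V B"
      using T alg_hom_to_in_carrier[OF psi generator_Omega] by (auto simp: a_def mem_idx_iff)
    have TU: "T \<in> U" using T VU by blast
    have "\<psi> u = proj V B u (T, a)"
      unfolding proj_at[OF Ta] unfolding a_def by (rule alg_hom_to_eq_eval_generators[OF pvU TU psi u])
    also have "\<dots> = proj V B v (T, a)"
      using hV[unfolded holds_iff, rule_format, OF alg_hom_to_eval[OF Ta]] by simp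
    also have "\<dots> = \<psi> v"
      unfolding proj_at[OF Ta] unfolding a_def by (rule alg_hom_to_eq_eval_generators[OF pvU TU psi v, symmetric])
    finally show "\<psi> u = \<psi> v" .
  qed
next
  assume hU: "holds ar U T (B, u, v)"
  show "holds ar V T (B, proj V B u, proj V B v)"
    unfolding holds_iff
  proof (intro allI impI)
    fix \<psi> assume psi: "alg_hom_to ar V B T \<psi>"
    have "alg_hom_to ar U B T (\<psi> \<circ> proj V B)"
      unfolding alg_hom_to_def
    proof (intro conjI allI impI)
      show "continuous_map (OmegaTop ar U B) (discrete_topology (fst T)) (\<psi> \<circ> proj V B)"
        using continuous_map_proj[OF VU] alg_hom_to_continuous[OF psi] by (rule continuous_map_compose)
      fix f ws assume fws: "length ws = ar f \<and> set ws \<subseteq> Omega ar U B"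
      then have "set (map (proj V B) ws) \<subseteq> Omega ar V B" using proj_Omega[OF VU] by auto
      then show "(\<psi> \<circ> proj V B) (omop U B f ws) = snd T f (map (\<psi> \<circ> proj V B) ws)"
        using alg_hom_to_omop[OF psi, of "map (proj V B) ws" f] fws by (simp add: proj_omop[OF VU])
    qed
    then have "(\<psi> \<circ> proj V B) u = (\<psi> \<circ> proj V B) v" by (rule hU[unfolded holds_iff, rule_format])
    then show "\<psi> (proj V B u) = \<psi> (proj V B v)" by simp
  qed
qed

section \<open>Provability\<close>

lemma cont_hom_continuous:
  "cont_hom ar W B A \<phi> \<Longrightarrow> continuous_map (OmegaTop ar W B) (OmegaTop ar W A) \<phi>"
  unfolding cont_hom_def by blast

lemma cont_hom_Omega: "cont_hom ar W B A \<phi> \<Longrightarrow> x \<in> Omega ar W B \<Longrightarrow> \<phi> x \<in> Omega ar W A"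
  using continuous_map_funspace[OF cont_hom_continuous] by fastforce

lemma cont_hom_omop:
  "cont_hom ar W B A \<phi> \<Longrightarrow> length ws = ar f \<Longrightarrow> set ws \<subseteq> Omega ar W B \<Longrightarrow>
   \<phi> (omop W B f ws) = omop W A f (map \<phi> ws)"
  unfolding cont_hom_def by simp

lemma cont_hom_teval:
  assumes pv: "pseudovariety ar W" and \<phi>: "cont_hom ar W B A \<phi>" and env: "set env \<subseteq> Omega ar W B"
  shows "wf_trm ar (length env) t \<Longrightarrow> \<phi> (teval W B env t) = teval W A (map \<phi> env) t"
proof (induction t)
  case (TApp f ts)
  have "set (map (teval W B env) ts) \<subseteq> Omega ar W B"
    using TApp.prems env teval_Omega[OF pv] by auto
  moreover have "map \<phi> (map (teval W B env) ts) = map (teval W A (map \<phi> env)) ts"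
    using TApp by auto
  moreover have "length (map (teval W B env) ts) = ar f" using TApp.prems by simp
  ultimately show ?case by (simp only: teval.simps cont_hom_omop[OF \<phi>])
qed simp

lemma cont_hom_comp:
  assumes "cont_hom ar W B0 B \<psi>" "cont_hom ar W B A \<phi>"
  shows "cont_hom ar W B0 A (\<phi> \<circ> \<psi>)"
  unfolding cont_hom_def
proof (intro conjI allI impI)
  show "continuous_map (OmegaTop ar W B0) (OmegaTop ar W A) (\<phi> \<circ> \<psi>)"
    using assms by (metis cont_hom_continuous continuous_map_compose)
  fix f ws assume "length ws = ar f \<and> set ws \<subseteq> Omega ar W B0"
  moreover have "set (map \<psi> ws) \<subseteq> Omega ar W B" if "set ws \<subseteq> Omega ar W B0"
    using that cont_hom_Omega[OF assms(1)] by auto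
  ultimately show "(\<phi> \<circ> \<psi>) (omop W B0 f ws) = omop W A f (map (\<phi> \<circ> \<psi>) ws)"
    using cont_hom_omop[OF assms(1)] cont_hom_omop[OF assms(2)] by simp
qed

lemma proj_teval:
  assumes "V \<subseteq> U"
  shows "wf_trm ar (length env) t \<Longrightarrow> proj V A (teval U A env t) = teval V A (map (proj V A) env) t"
proof (induction t)
  case (TApp f ts)
  then have "map (proj V A) (map (teval U A env) ts) = map (teval V A (map (proj V A) env)) ts"
    by auto
  then show ?case by (simp only: teval.simps proj_omop[OF assms])
qed simp

lemma teval_at_depends:
  "k \<in> idx W A \<Longrightarrow> x k = y k \<Longrightarrow> teval W A (x # ws) t k = teval W A (y # ws) t k"
proof (induction t)
  case (TVar i)
  then show ?case by (cases i) simp_all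
next
  case (TApp f ts)
  then have "map (\<lambda>z. z k) (map (teval W A (x # ws)) ts) = map (\<lambda>z. z k) (map (teval W A (y # ws)) ts)"
    by auto
  then show ?case using TApp.prems(1) by (simp only: teval.simps omop_def restrict_apply' fst_conv)
qed

lemma continuous_map_teval:
  assumes pv: "pseudovariety ar W" and ws: "set ws \<subseteq> Omega ar W A"
    and t: "wf_trm ar (Suc (length ws)) t"
  shows "continuous_map (OmegaTop ar W A) (OmegaTop ar W A) (\<lambda>x. teval W A (x # ws) t)"
proof (rule continuous_map_OmegaTop_coordinatewise)
  show "teval W A (x # ws) t \<in> Omega ar W A" if "x \<in> Omega ar W A" for x
    using teval_Omega[OF pv, of "x # ws" A t] that ws t by simp
  fix k assume k: "k \<in> idx W A"
  then show "\<exists>j\<in>idx W A. \<forall>x\<in>Omega ar W A. \<forall>y\<in>Omega ar W A. x j = y j \<longrightarrow>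
      teval W A (x # ws) t k = teval W A (y # ws) t k"
    using teval_at_depends[OF k] by blast
qed

fun tsubst :: "(nat \<Rightarrow> 'f trm) \<Rightarrow> 'f trm \<Rightarrow> 'f trm" where
  "tsubst s (TVar i) = s i"
| "tsubst s (TApp f ts) = TApp f (map (tsubst s) ts)"

lemma teval_tsubst:
  "wf_trm ar n t \<Longrightarrow> teval W A env (tsubst s t) = teval W A (map (\<lambda>i. teval W A env (s i)) [0..<n]) t"
proof (induction t)
  case (TApp f ts)
  then have "map (teval W A env) (map (tsubst s) ts) = map (teval W A (map (\<lambda>i. teval W A env (s i)) [0..<n])) ts"
    by auto
  then show ?case by (simp only: tsubst.simps teval.simps)
qed simp

lemma wf_trm_tsubst:
  "wf_trm ar n t \<Longrightarrow> (\<And>i. i < n \<Longrightarrow> wf_trm ar m (s i)) \<Longrightarrow> wf_trm ar m (tsubst s t)"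
  by (induction t) auto

lemma wf_trm_mono: "wf_trm ar n t \<Longrightarrow> n \<le> m \<Longrightarrow> wf_trm ar m t"
  by (induction t) auto

lemma teval_append: "wf_trm ar (length xs) t \<Longrightarrow> teval W A (xs @ ys) t = teval W A xs t"
proof (induction t)
  case (TApp f ts)
  then have "map (teval W A (xs @ ys)) ts = map (teval W A xs) ts" by auto
  then show ?case by (simp only: teval.simps)
qed (simp add: nth_append)

text \<open>The substitution s puts t' in place of variable 0 and shifts the other variables of t past
those of t'.\<close>
lemma teval_plug:
  assumes t': "wf_trm ar (Suc (length ws')) t'" and t: "wf_trm ar (Suc (length ws)) t"
  defines "s \<equiv> \<lambda>i. if i = 0 then t' else TVar (Suc (length ws') + (i - 1))"
  shows "teval W A (x # ws' @ ws) (tsubst s t) = teval W A (teval W A (x # ws') t' # ws) t"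
proof -
  have "map (\<lambda>i. teval W A (x # ws' @ ws) (s i)) [0..<Suc (length ws)] = teval W A (x # ws') t' # ws"
  proof (rule nth_equalityI)
    fix i assume "i < length (map (\<lambda>i. teval W A (x # ws' @ ws) (s i)) [0..<Suc (length ws)])"
    then show "map (\<lambda>i. teval W A (x # ws' @ ws) (s i)) [0..<Suc (length ws)] ! i
        = (teval W A (x # ws') t' # ws) ! i"
      using teval_append[of ar "x # ws'" t' W A ws] t'
      by (cases i) (auto simp: s_def nth_append simp del: upt_Suc)
  qed simp
  then show ?thesis using teval_tsubst[OF t] by simp
qed

lemma Gamma0I:
  assumes "(B, u, v) \<in> \<Gamma> \<or> (B, v, u) \<in> \<Gamma>" "cont_hom ar W B A \<phi>" "set ws \<subseteq> Omega ar W A"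
    "wf_trm ar (Suc (length ws)) t"
  shows "(teval W A (\<phi> u # ws) t, teval W A (\<phi> v # ws) t) \<in> Gamma0 ar W \<Gamma> A"
  unfolding Gamma0_def using assms by blast

lemma Gamma0E:
  assumes "p \<in> Gamma0 ar W \<Gamma> A"
  obtains B u v \<phi> t ws where "p = (teval W A (\<phi> u # ws) t, teval W A (\<phi> v # ws) t)"
    "(B, u, v) \<in> \<Gamma> \<or> (B, v, u) \<in> \<Gamma>" "cont_hom ar W B A \<phi>" "set ws \<subseteq> Omega ar W A"
    "wf_trm ar (Suc (length ws)) t"
  using assms unfolding Gamma0_def by blast

lemma is_pid_iff: "is_pid ar W (B, u, v) \<longleftrightarrow> finite B \<and> u \<in> Omega ar W B \<and> v \<in> Omega ar W B"
  by (simp add: is_pid_def)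

lemma continuous_map_map_prod:
  assumes "continuous_map X Y f"
  shows "continuous_map (prod_topology X X) (prod_topology Y Y) (map_prod f f)"
  using continuous_map_prod_top[of X X Y Y f f] assms by (simp add: map_prod_def)

lemma provable_Omega:
  assumes pv: "pseudovariety ar W" and \<Gamma>: "\<forall>e\<in>\<Gamma>. is_pid ar W e"
  shows "p \<in> provable ar W \<Gamma> A \<Longrightarrow> p \<in> Omega ar W A \<times> Omega ar W A"
proof (induction rule: provable.induct)
  case (base p)
  then obtain B u v \<phi> t ws where p: "p = (teval W A (\<phi> u # ws) t, teval W A (\<phi> v # ws) t)"
    "(B, u, v) \<in> \<Gamma> \<or> (B, v, u) \<in> \<Gamma>" "cont_hom ar W B A \<phi>" "set ws \<subseteq> Omega ar W A"
    "wf_trm ar (Suc (length ws)) t" by (rule Gamma0E)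
  have "u \<in> Omega ar W B" "v \<in> Omega ar W B" using p(2) \<Gamma> by (auto simp: is_pid_iff)
  then have "\<phi> u \<in> Omega ar W A" "\<phi> v \<in> Omega ar W A" using cont_hom_Omega[OF p(3)] by auto
  then show ?case unfolding p(1) using teval_Omega[OF pv] p(4,5) by simp
next
  case (clos p R)
  then show ?case
    using closure_of_subset_topspace[of "prod_topology (OmegaTop ar W A) (OmegaTop ar W A)" R] by auto
qed simp

lemma closedin_provable:
  assumes pv: "pseudovariety ar W" and \<Gamma>: "\<forall>e\<in>\<Gamma>. is_pid ar W e"
  shows "closedin (prod_topology (OmegaTop ar W A) (OmegaTop ar W A)) (provable ar W \<Gamma> A)"
proof -
  have "provable ar W \<Gamma> A \<subseteq> topspace (prod_topology (OmegaTop ar W A) (OmegaTop ar W A))"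
    using provable_Omega[OF pv \<Gamma>] by auto
  moreover have "prod_topology (OmegaTop ar W A) (OmegaTop ar W A) closure_of provable ar W \<Gamma> A
      \<subseteq> provable ar W \<Gamma> A"
    using provable.clos by blast
  ultimately show ?thesis using closure_of_subset_eq by blast
qed

lemma provable_sym:
  "p \<in> provable ar W \<Gamma> A \<Longrightarrow> prod.swap p \<in> provable ar W \<Gamma> A"
proof (induction rule: provable.induct)
  case (base p)
  then obtain B u v \<phi> t ws where p: "p = (teval W A (\<phi> u # ws) t, teval W A (\<phi> v # ws) t)"
    "(B, u, v) \<in> \<Gamma> \<or> (B, v, u) \<in> \<Gamma>" "cont_hom ar W B A \<phi>" "set ws \<subseteq> Omega ar W A"
    "wf_trm ar (Suc (length ws)) t" by (rule Gamma0E)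
  have "(B, v, u) \<in> \<Gamma> \<or> (B, u, v) \<in> \<Gamma>" using p(2) by blast
  then show ?case unfolding p(1) by (simp add: provable.base Gamma0I p(3-5))
next
  case (trans x y z)
  then show ?case by (auto intro: provable.trans)
next
  case (clos p R)
  have "continuous_map (prod_topology (OmegaTop ar W A) (OmegaTop ar W A))
      (prod_topology (OmegaTop ar W A) (OmegaTop ar W A)) prod.swap"
    unfolding prod.swap_def by (intro continuous_map_pairedI continuous_map_fst continuous_map_snd)
  then have "prod.swap p \<in> prod_topology (OmegaTop ar W A) (OmegaTop ar W A) closure_of (prod.swap ` R)"
    using continuous_map_image_closure_subset clos.hyps by blast
  then show ?case using clos.IH by (auto intro: provable.clos)
qed

lemma provable_map:
  assumes f: "continuous_map (OmegaTop ar W B) (OmegaTop ar W A) f"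
    and base: "\<And>p. p \<in> Gamma0 ar W \<Gamma> B \<Longrightarrow> map_prod f f p \<in> provable ar W \<Gamma>' A"
  shows "p \<in> provable ar W \<Gamma> B \<Longrightarrow> map_prod f f p \<in> provable ar W \<Gamma>' A"
proof (induction rule: provable.induct)
  case (base p)
  then show ?case by (rule assms(2))
next
  case (trans x y z)
  then show ?case by (auto intro: provable.trans)
next
  case (clos p R)
  have "map_prod f f p \<in> prod_topology (OmegaTop ar W A) (OmegaTop ar W A) closure_of (map_prod f f ` R)"
    using continuous_map_image_closure_subset[OF continuous_map_map_prod[OF f]] clos.hyps by blast
  then show ?case using clos.IH by (auto intro: provable.clos)
qed

lemma provable_cont_hom_image:
  assumes pv: "pseudovariety ar W" and \<Gamma>: "\<forall>e\<in>\<Gamma>. is_pid ar W e" and \<phi>: "cont_hom ar W B A \<phi>"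
    and xy: "(x, y) \<in> provable ar W \<Gamma> B"
  shows "(\<phi> x, \<phi> y) \<in> provable ar W \<Gamma> A"
proof -
  have "map_prod \<phi> \<phi> p \<in> provable ar W \<Gamma> A" if "p \<in> Gamma0 ar W \<Gamma> B" for p
  proof -
    obtain B0 u v \<psi> t ws where p: "p = (teval W B (\<psi> u # ws) t, teval W B (\<psi> v # ws) t)"
      "(B0, u, v) \<in> \<Gamma> \<or> (B0, v, u) \<in> \<Gamma>" "cont_hom ar W B0 B \<psi>" "set ws \<subseteq> Omega ar W B"
      "wf_trm ar (Suc (length ws)) t" using \<open>p \<in> Gamma0 ar W \<Gamma> B\<close> by (rule Gamma0E)
    have uv: "u \<in> Omega ar W B0" "v \<in> Omega ar W B0" using p(2) \<Gamma> by (auto simp: is_pid_iff)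
    have "\<phi> (teval W B (\<psi> z # ws) t) = teval W A ((\<phi> \<circ> \<psi>) z # map \<phi> ws) t" if "z \<in> Omega ar W B0" for z
      using cont_hom_teval[OF pv \<phi>, of "\<psi> z # ws" t] cont_hom_Omega[OF p(3) that] p(4,5) by simp
    moreover have "set (map \<phi> ws) \<subseteq> Omega ar W A" using p(4) cont_hom_Omega[OF \<phi>] by auto
    ultimately show ?thesis
      using Gamma0I[OF p(2) cont_hom_comp[OF p(3) \<phi>], of "map \<phi> ws" t] p(5) uv
      by (simp add: p(1) provable.base)
  qed
  from provable_map[OF cont_hom_continuous[OF \<phi>] this xy] show ?thesis by simp
qed

lemma provable_context:
  assumes pv: "pseudovariety ar W" and ws: "set ws \<subseteq> Omega ar W A" and t: "wf_trm ar (Suc (length ws)) t"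
    and xy: "(x, y) \<in> provable ar W \<Gamma> A"
  shows "(teval W A (x # ws) t, teval W A (y # ws) t) \<in> provable ar W \<Gamma> A"
proof -
  let ?f = "\<lambda>x. teval W A (x # ws) t"
  have "map_prod ?f ?f p \<in> provable ar W \<Gamma> A" if "p \<in> Gamma0 ar W \<Gamma> A" for p
  proof -
    obtain B u v \<psi> t' ws' where p: "p = (teval W A (\<psi> u # ws') t', teval W A (\<psi> v # ws') t')"
      "(B, u, v) \<in> \<Gamma> \<or> (B, v, u) \<in> \<Gamma>" "cont_hom ar W B A \<psi>" "set ws' \<subseteq> Omega ar W A"
      "wf_trm ar (Suc (length ws')) t'" using \<open>p \<in> Gamma0 ar W \<Gamma> A\<close> by (rule Gamma0E)
    define s where "s = (\<lambda>i. if i = 0 then t' else TVar (Suc (length ws') + (i - 1)))"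
    have "wf_trm ar (Suc (length (ws' @ ws))) (tsubst s t)"
      using wf_trm_mono[OF p(5)] by (intro wf_trm_tsubst[OF t]) (auto simp: s_def)
    then have "(teval W A (\<psi> u # ws' @ ws) (tsubst s t), teval W A (\<psi> v # ws' @ ws) (tsubst s t))
        \<in> Gamma0 ar W \<Gamma> A"
      using ws p(4) by (intro Gamma0I[OF p(2,3)]) auto
    then show ?thesis
      unfolding p(1) s_def by (simp add: teval_plug[OF p(5) t] provable.base)
  qed
  from provable_map[OF continuous_map_teval[OF pv ws t] this xy] show ?thesis by simp
qed

lemma provable_if_axioms_provable:
  assumes pv: "pseudovariety ar W" and \<Gamma>: "\<forall>e\<in>\<Gamma>. is_pid ar W e"
    and axioms: "\<And>B u v. (B, u, v) \<in> \<Sigma> \<Longrightarrow> (u, v) \<in> provable ar W \<Gamma> B"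
    and xy: "(x, y) \<in> provable ar W \<Sigma> A"
  shows "(x, y) \<in> provable ar W \<Gamma> A"
proof -
  have "map_prod id id p \<in> provable ar W \<Gamma> A" if "p \<in> Gamma0 ar W \<Sigma> A" for p
  proof -
    obtain B u v \<phi> t ws where p: "p = (teval W A (\<phi> u # ws) t, teval W A (\<phi> v # ws) t)"
      "(B, u, v) \<in> \<Sigma> \<or> (B, v, u) \<in> \<Sigma>" "cont_hom ar W B A \<phi>" "set ws \<subseteq> Omega ar W A"
      "wf_trm ar (Suc (length ws)) t" using \<open>p \<in> Gamma0 ar W \<Sigma> A\<close> by (rule Gamma0E)
    have "(u, v) \<in> provable ar W \<Gamma> B"
      using p(2) axioms provable_sym[of "(v, u)"] by auto
    then have "(\<phi> u, \<phi> v) \<in> provable ar W \<Gamma> A" by (rule provable_cont_hom_image[OF pv \<Gamma> p(3)])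
    then show ?thesis unfolding p(1) using provable_context[OF pv p(4,5)] by simp
  qed
  from provable_map[OF continuous_map_id this xy] show ?thesis by simp
qed

section \<open>Lifting provability along the projection\<close>

text \<open>The continuous homomorphism from Omega_B W to Omega_A W sending the generator b to \<xi> b.\<close>
definition subst_hom :: "'f alg set \<Rightarrow> nat set \<Rightarrow> nat set \<Rightarrow> (nat \<Rightarrow> 'f iop) \<Rightarrow> 'f iop \<Rightarrow> 'f iop" where
  "subst_hom W B A \<xi> z = restrict (\<lambda>k. z (fst k, restrict (\<lambda>b. \<xi> b k) B)) (idx W A)"

lemma subst_hom_idx:
  assumes \<xi>: "\<And>b. b \<in> B \<Longrightarrow> \<xi> b \<in> Omega ar W A" and Ta: "(T, a) \<in> idx W A"
  shows "(T, restrict (\<lambda>b. \<xi> b (T, a)) B) \<in> idx W B"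
proof -
  have "restrict (\<lambda>b. \<xi> b (T, a)) B \<in> B \<rightarrow>\<^sub>E fst T" using Omega_in_carrier[OF \<xi> Ta] by auto
  then show ?thesis using Ta by (simp add: mem_idx_iff)
qed

lemma subst_hom_at:
  "(T, a) \<in> idx W A \<Longrightarrow> subst_hom W B A \<xi> z (T, a) = z (T, restrict (\<lambda>b. \<xi> b (T, a)) B)"
  unfolding subst_hom_def by simp

lemma subst_hom_Omega:
  assumes \<xi>: "\<And>b. b \<in> B \<Longrightarrow> \<xi> b \<in> Omega ar W A" and z: "z \<in> Omega ar W B"
  shows "subst_hom W B A \<xi> z \<in> Omega ar W A"
proof (rule OmegaI)
  show "subst_hom W B A \<xi> z \<in> extensional (idx W A)"
    unfolding subst_hom_def by (rule restrict_extensional)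
next
  fix T a assume Ta: "(T, a) \<in> idx W A"
  show "subst_hom W B A \<xi> z (T, a) \<in> fst T"
    unfolding subst_hom_at[OF Ta] by (rule Omega_in_carrier[OF z subst_hom_idx[OF \<xi> Ta]])
next
  fix T T' h a assume T: "T \<in> W" "T' \<in> W" "is_hom ar T T' h" "a \<in> A \<rightarrow>\<^sub>E fst T"
  have Ta: "(T, a) \<in> idx W A" and Ta': "(T', restrict (h \<circ> a) A) \<in> idx W A"
    using T restrict_hom_comp_PiE[OF T(3,4)] by (simp_all add: mem_idx_iff)
  let ?c = "restrict (\<lambda>b. \<xi> b (T, a)) B"
  have cB: "?c \<in> B \<rightarrow>\<^sub>E fst T" using subst_hom_idx[OF \<xi> Ta] by (simp add: mem_idx_iff)
  have "restrict (\<lambda>b. \<xi> b (T', restrict (h \<circ> a) A)) B = restrict (h \<circ> ?c) B"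
    using Omega_natural[OF \<xi> T] by (intro restrict_ext) simp
  then have "subst_hom W B A \<xi> z (T', restrict (h \<circ> a) A) = z (T', restrict (h \<circ> ?c) B)"
    unfolding subst_hom_at[OF Ta'] by simp
  also have "\<dots> = h (z (T, ?c))" by (rule Omega_natural[OF z T(1,2,3) cB])
  finally show "subst_hom W B A \<xi> z (T', restrict (h \<circ> a) A) = h (subst_hom W B A \<xi> z (T, a))"
    unfolding subst_hom_at[OF Ta] .
qed

lemma cont_hom_subst_hom:
  assumes \<xi>: "\<And>b. b \<in> B \<Longrightarrow> \<xi> b \<in> Omega ar W A"
  shows "cont_hom ar W B A (subst_hom W B A \<xi>)"
  unfolding cont_hom_def
proof (intro conjI allI impI)
  show "continuous_map (OmegaTop ar W B) (OmegaTop ar W A) (subst_hom W B A \<xi>)"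
  proof (rule continuous_map_OmegaTop_coordinatewise)
    show "subst_hom W B A \<xi> x \<in> Omega ar W A" if "x \<in> Omega ar W B" for x
      by (rule subst_hom_Omega[OF \<xi> that])
    fix k assume k: "k \<in> idx W A"
    obtain T a where Ta: "k = (T, a)" by (cases k)
    then have Ta_idx: "(T, a) \<in> idx W A" using k by simp
    then have "\<forall>x\<in>Omega ar W B. \<forall>y\<in>Omega ar W B.
        x (T, restrict (\<lambda>b. \<xi> b (T, a)) B) = y (T, restrict (\<lambda>b. \<xi> b (T, a)) B) \<longrightarrow>
        subst_hom W B A \<xi> x k = subst_hom W B A \<xi> y k"
      unfolding Ta subst_hom_at[OF Ta_idx] by simp
    then show "\<exists>j\<in>idx W B. \<forall>x\<in>Omega ar W B. \<forall>y\<in>Omega ar W B. x j = y j \<longrightarrow>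
        subst_hom W B A \<xi> x k = subst_hom W B A \<xi> y k"
      by (rule bexI[OF _ subst_hom_idx[OF \<xi> Ta_idx]])
  qed
  fix f ws assume "length ws = ar f \<and> set ws \<subseteq> Omega ar W B"
  show "subst_hom W B A \<xi> (omop W B f ws) = omop W A f (map (subst_hom W B A \<xi>) ws)"
  proof
    fix k
    show "subst_hom W B A \<xi> (omop W B f ws) k = omop W A f (map (subst_hom W B A \<xi>) ws) k"
    proof (cases "k \<in> idx W A")
      case True
      obtain T a where Ta: "k = (T, a)" by (cases k)
      then have k: "(T, a) \<in> idx W A" using True by simp
      have args: "map (\<lambda>w. w (T, a)) (map (subst_hom W B A \<xi>) ws)
          = map (\<lambda>w. w (T, restrict (\<lambda>b. \<xi> b (T, a)) B)) ws"
        using subst_hom_at[OF k] by simp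
      show ?thesis
        unfolding Ta subst_hom_at[OF k] omop_at[OF k] args by (rule omop_at[OF subst_hom_idx[OF \<xi> k]])
    qed (simp add: subst_hom_def omop_def)
  qed
qed

lemma alg_hom_to_cont_hom_coord:
  assumes \<phi>: "cont_hom ar W B A \<phi>" and Ta: "(T, a) \<in> idx W A"
  shows "alg_hom_to ar W B T (\<lambda>z. \<phi> z (T, a))"
  unfolding alg_hom_to_def
proof (intro conjI allI impI)
  show "continuous_map (OmegaTop ar W B) (discrete_topology (fst T)) (\<lambda>z. \<phi> z (T, a))"
    using continuous_map_compose[OF cont_hom_continuous[OF \<phi>] continuous_map_OmegaTop_eval[OF Ta]]
    by (simp add: o_def)
  fix f ws assume "length ws = ar f \<and> set ws \<subseteq> Omega ar W B"
  then show "\<phi> (omop W B f ws) (T, a) = snd T f (map (\<lambda>z. \<phi> z (T, a)) ws)"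
    using cont_hom_omop[OF \<phi>] omop_at[OF Ta] by (simp add: o_def)
qed

lemma proj_subst_hom:
  assumes pvV: "pseudovariety ar V" and VU: "V \<subseteq> U" and \<phi>: "cont_hom ar V B A \<phi>"
    and \<xi>: "\<And>b. b \<in> B \<Longrightarrow> \<xi> b \<in> Omega ar U A"
    and \<xi>_proj: "\<And>b. b \<in> B \<Longrightarrow> proj V A (\<xi> b) = \<phi> (generator V B b)"
    and u: "u \<in> Omega ar U B"
  shows "proj V A (subst_hom U B A \<xi> u) = \<phi> (proj V B u)"
proof
  fix k
  show "proj V A (subst_hom U B A \<xi> u) k = \<phi> (proj V B u) k"
  proof (cases "k \<in> idx V A")
    case True
    obtain T a where Ta: "k = (T, a)" by (cases k)
    have kV: "(T, a) \<in> idx V A" using True Ta by simp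
    have kU: "(T, a) \<in> idx U A" using kV idx_mono[OF VU] by blast
    have TV: "T \<in> V" using kV by (simp add: mem_idx_iff)
    let ?c = "restrict (\<lambda>b. \<xi> b (T, a)) B"
    have cV: "(T, ?c) \<in> idx V B" using subst_hom_idx[OF \<xi> kU] TV by (simp add: mem_idx_iff)
    have "restrict (\<lambda>b. \<phi> (generator V B b) (T, a)) B = ?c"
      using \<xi>_proj proj_at[OF kV] by (intro restrict_ext) metis
    then have "\<phi> (proj V B u) (T, a) = proj V B u (T, ?c)"
      using alg_hom_to_eq_eval_generators[OF pvV TV alg_hom_to_cont_hom_coord[OF \<phi> kV] proj_Omega[OF VU u]]
      by simp
    also have "\<dots> = proj V A (subst_hom U B A \<xi> u) (T, a)"
      by (simp add: proj_at[OF cV] proj_at[OF kV] subst_hom_at[OF kU])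
    finally show ?thesis unfolding Ta by simp
  next
    case False
    have "\<phi> (proj V B u) \<in> Omega ar V A" by (rule cont_hom_Omega[OF \<phi> proj_Omega[OF VU u]])
    then have "\<phi> (proj V B u) k = undefined" using False by (rule extensional_arb[OF Omega_extensional])
    then show ?thesis using False by (simp add: proj_def)
  qed
qed

lemma cont_hom_lift_proj:
  assumes pvU: "pseudovariety ar U" and pvV: "pseudovariety ar V" and VU: "V \<subseteq> U"
    and ne: "Omega ar U A \<noteq> {}" and \<phi>: "cont_hom ar V B A \<phi>"
  obtains \<psi> where "cont_hom ar U B A \<psi>" "\<And>x. x \<in> Omega ar U B \<Longrightarrow> proj V A (\<psi> x) = \<phi> (proj V B x)"
proof -
  have "\<forall>b\<in>B. \<exists>y. y \<in> Omega ar U A \<and> proj V A y = \<phi> (generator V B b)"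
  proof
    fix b assume b: "b \<in> B"
    have "\<phi> (generator V B b) \<in> proj V A ` Omega ar U A"
      using cont_hom_Omega[OF \<phi> generator_Omega[OF b]] proj_image_Omega[OF pvU pvV VU ne] by simp
    then show "\<exists>y. y \<in> Omega ar U A \<and> proj V A y = \<phi> (generator V B b)" by auto
  qed
  then obtain \<xi> where \<xi>: "\<And>b. b \<in> B \<Longrightarrow> \<xi> b \<in> Omega ar U A"
    and \<xi>_proj: "\<And>b. b \<in> B \<Longrightarrow> proj V A (\<xi> b) = \<phi> (generator V B b)"
    by metis
  have "cont_hom ar U B A (subst_hom U B A \<xi>)" by (rule cont_hom_subst_hom) (rule \<xi>)
  moreover have "proj V A (subst_hom U B A \<xi> x) = \<phi> (proj V B x)" if "x \<in> Omega ar U B" for x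
    using \<xi> \<xi>_proj that by (rule proj_subst_hom[OF pvV VU \<phi>])
  ultimately show thesis by (rule that)
qed

lemma Gamma0_proj_lift:
  assumes pvU: "pseudovariety ar U" and pvV: "pseudovariety ar V" and VU: "V \<subseteq> U"
    and \<Gamma>: "\<forall>e\<in>\<Gamma>. is_pid ar U e" and ne: "Omega ar U A \<noteq> {}"
    and p: "p \<in> Gamma0 ar V (proj_set V \<Gamma>) A"
  shows "p \<in> map_prod (proj V A) (proj V A) ` Gamma0 ar U \<Gamma> A"
proof -
  obtain B u1 v1 \<phi> t ws where p: "p = (teval V A (\<phi> u1 # ws) t, teval V A (\<phi> v1 # ws) t)"
    "(B, u1, v1) \<in> proj_set V \<Gamma> \<or> (B, v1, u1) \<in> proj_set V \<Gamma>" "cont_hom ar V B A \<phi>"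
    "set ws \<subseteq> Omega ar V A" "wf_trm ar (Suc (length ws)) t"
    using p by (rule Gamma0E)
  obtain u0 v0 where uv0: "u1 = proj V B u0" "v1 = proj V B v0" "(B, u0, v0) \<in> \<Gamma> \<or> (B, v0, u0) \<in> \<Gamma>"
    using p(2) unfolding proj_set_def by blast
  have u0v0: "u0 \<in> Omega ar U B" "v0 \<in> Omega ar U B" using uv0(3) \<Gamma> by (auto simp: is_pid_iff)
  have "set ws \<subseteq> proj V A ` Omega ar U A" using p(4) proj_image_Omega[OF pvU pvV VU ne] by simp
  then obtain ws' where ws': "set ws' \<subseteq> Omega ar U A" "ws = map (proj V A) ws'"
    by (blast elim: list_in_image_obtain)
  obtain \<psi> where \<psi>: "cont_hom ar U B A \<psi>" "\<And>x. x \<in> Omega ar U B \<Longrightarrow> proj V A (\<psi> x) = \<phi> (proj V B x)"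
    using cont_hom_lift_proj[OF pvU pvV VU ne p(3)] by blast
  have wf: "wf_trm ar (Suc (length ws')) t" using p(5) ws'(2) by simp
  have proj_eval: "proj V A (teval U A (\<psi> x # ws') t) = teval V A (\<phi> (proj V B x) # ws) t"
    if "x \<in> Omega ar U B" for x
    using proj_teval[OF VU, where env = "\<psi> x # ws'" and t = t and A = A] wf \<psi>(2)[OF that] ws'(2) by simp
  have "(teval U A (\<psi> u0 # ws') t, teval U A (\<psi> v0 # ws') t) \<in> Gamma0 ar U \<Gamma> A"
    by (rule Gamma0I[OF uv0(3) \<psi>(1) ws'(1) wf])
  then show ?thesis
    unfolding p(1) uv0(1,2) by (rule rev_image_eqI) (simp add: proj_eval u0v0)
qed

lemma closedin_proj_provable:
  assumes pvU: "pseudovariety ar U" and VU: "V \<subseteq> U" and \<Gamma>: "\<forall>e\<in>\<Gamma>. is_pid ar U e"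
  shows "closedin (prod_topology (OmegaTop ar V A) (OmegaTop ar V A))
           (map_prod (proj V A) (proj V A) ` provable ar U \<Gamma> A)"
proof -
  have "compact_space (prod_topology (OmegaTop ar U A) (OmegaTop ar U A))"
    using compact_space_OmegaTop[OF pvU] by (simp add: compact_space_prod_topology)
  then have "compactin (prod_topology (OmegaTop ar U A) (OmegaTop ar U A)) (provable ar U \<Gamma> A)"
    using closedin_provable[OF pvU \<Gamma>] by (rule closedin_compact_space)
  then have "compactin (prod_topology (OmegaTop ar V A) (OmegaTop ar V A))
      (map_prod (proj V A) (proj V A) ` provable ar U \<Gamma> A)"
    using continuous_map_map_prod[OF continuous_map_proj[OF VU]] by (rule image_compactin)
  moreover have "Hausdorff_space (prod_topology (OmegaTop ar V A) (OmegaTop ar V A))"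
    by (simp add: Hausdorff_space_prod_topology Hausdorff_space_OmegaTop)
  ultimately show ?thesis using compactin_imp_closedin by blast
qed

text \<open>The projected provable pairs form a closed set by compactness, and the kernel hypothesis makes
them transitive, so they contain everything provable from the projected pseudoidentities.\<close>
lemma provable_proj_lift:
  assumes pvU: "pseudovariety ar U" and pvV: "pseudovariety ar V" and VU: "V \<subseteq> U"
    and \<Gamma>: "\<forall>e\<in>\<Gamma>. is_pid ar U e" and ne: "Omega ar U A \<noteq> {}"
    and kernel: "\<forall>x\<in>Omega ar U A. \<forall>y\<in>Omega ar U A. proj V A x = proj V A y \<longrightarrow>
      (x, y) \<in> provable ar U \<Gamma> A"
  shows "p \<in> provable ar V (proj_set V \<Gamma>) A \<Longrightarrow>
    p \<in> map_prod (proj V A) (proj V A) ` provable ar U \<Gamma> A"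
proof (induction rule: provable.induct)
  case (base p)
  then show ?case
    using Gamma0_proj_lift[OF pvU pvV VU \<Gamma> ne] provable.base by blast
next
  case (trans x y z)
  obtain a b where ab: "(a, b) \<in> provable ar U \<Gamma> A" "x = proj V A a" "y = proj V A b"
    using trans.IH(1) by auto
  obtain c d where cd: "(c, d) \<in> provable ar U \<Gamma> A" "y = proj V A c" "z = proj V A d"
    using trans.IH(2) by auto
  have "b \<in> Omega ar U A" "c \<in> Omega ar U A"
    using provable_Omega[OF pvU \<Gamma>] ab(1) cd(1) by auto
  then have "(b, c) \<in> provable ar U \<Gamma> A" using kernel ab(3) cd(2) by simp
  then have "(a, d) \<in> provable ar U \<Gamma> A" using ab(1) cd(1) provable.trans by metis
  then show ?case using ab(2) cd(3) by force
next
  case (clos p R)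
  then show ?case
    using closure_of_minimal[OF _ closedin_proj_provable[OF pvU VU \<Gamma>], of R] by blast
qed

lemma provable_if_proj_eq:
  assumes pvU: "pseudovariety ar U" and V: "V = Mods ar U \<Sigma>" and \<Sigma>: "h_strong ar U \<Sigma>"
    and A: "finite A" and x: "x \<in> Omega ar U A" and y: "y \<in> Omega ar U A"
    and eq: "proj V A x = proj V A y"
  shows "(x, y) \<in> provable ar U \<Sigma> A"
proof -
  have VU: "V \<subseteq> U" using V by (auto simp: Mods_def)
  have "holds ar U T (A, x, y)" if "T \<in> Mods ar U \<Sigma>" for T
    using holds_proj_iff[OF pvU VU _ x y, of T] that V eq by (simp add: holds_iff)
  then show ?thesis using \<Sigma> A x y unfolding h_strong_def by (simp add: is_pid_iff)
qed

lemma Mods_proj_set_subset: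
  assumes pvU: "pseudovariety ar U" and VU: "V \<subseteq> U" and \<Gamma>: "\<forall>e\<in>\<Gamma>. is_pid ar U e"
  shows "Mods ar V (proj_set V \<Gamma>) \<subseteq> Mods ar U \<Gamma>"
proof
  fix T assume T: "T \<in> Mods ar V (proj_set V \<Gamma>)"
  then have TV: "T \<in> V" by (simp add: Mods_def)
  have "holds ar U T e" if e: "e \<in> \<Gamma>" for e
  proof (cases e)
    case (fields B u v)
    then have "(B, proj V B u, proj V B v) \<in> proj_set V \<Gamma>" using e by (auto simp: proj_set_def)
    then have "holds ar V T (B, proj V B u, proj V B v)" using T by (simp add: Mods_def)
    then show ?thesis using holds_proj_iff[OF pvU VU TV] e \<Gamma> fields by (auto simp: is_pid_iff)
  qed
  then show "T \<in> Mods ar U \<Gamma>" using TV VU by (auto simp: Mods_def)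
qed

lemma provable_if_proj_eq_t_strong:
  assumes pvU: "pseudovariety ar U" and V: "V = Mods ar U \<Sigma>" and \<Sigma>: "h_strong ar U \<Sigma>"
    and t_strong: "\<forall>e\<in>\<Sigma>. t_strong ar U e" and \<Gamma>: "\<forall>e\<in>\<Gamma>. is_pid ar U e"
    and Mods_\<Gamma>: "Mods ar U \<Gamma> \<subseteq> V"
    and A: "finite A" and x: "x \<in> Omega ar U A" and y: "y \<in> Omega ar U A"
    and eq: "proj V A x = proj V A y"
  shows "(x, y) \<in> provable ar U \<Gamma> A"
proof -
  have "(u, v) \<in> provable ar U \<Gamma> B" if "(B, u, v) \<in> \<Sigma>" for B u v
  proof -
    have "\<forall>T\<in>Mods ar U \<Gamma>. holds ar U T (B, u, v)" using that V Mods_\<Gamma> by (auto simp: Mods_def)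
    then show ?thesis using t_strong \<Gamma> that unfolding t_strong_def by fastforce
  qed
  then show ?thesis
    using provable_if_axioms_provable[OF pvU \<Gamma>] provable_if_proj_eq[OF pvU V \<Sigma> A x y eq] by blast
qed

lemma proj_provable_if_valid:
  assumes pvU: "pseudovariety ar U" and VU: "V \<subseteq> U" and \<Gamma>: "\<forall>e\<in>\<Gamma>. is_pid ar U e"
    and \<Gamma>': "h_strong ar V (proj_set V \<Gamma>)"
    and uv: "is_pid ar U (A, u, v)" and valid: "\<forall>T\<in>Mods ar U \<Gamma>. holds ar U T (A, u, v)"
  shows "(proj V A u, proj V A v) \<in> provable ar V (proj_set V \<Gamma>) A"
proof -
  have A: "finite A" and u: "u \<in> Omega ar U A" and v: "v \<in> Omega ar U A"
    using uv by (simp_all add: is_pid_iff)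
  have "holds ar V T (A, proj V A u, proj V A v)" if T: "T \<in> Mods ar V (proj_set V \<Gamma>)" for T
  proof -
    have "holds ar U T (A, u, v)" using Mods_proj_set_subset[OF pvU VU \<Gamma>] T valid by blast
    moreover have "T \<in> V" using T by (simp add: Mods_def)
    ultimately show ?thesis using holds_proj_iff[OF pvU VU _ u v] by blast
  qed
  then show ?thesis
    using \<Gamma>' A proj_Omega[OF VU u] proj_Omega[OF VU v] unfolding h_strong_def by (simp add: is_pid_iff)
qed

theorem proposition4p2:
  fixes ar :: "'f::finite \<Rightarrow> nat"
    and U V :: "'f alg set"
    and \<Sigma> \<Gamma> :: "'f pid set"
  assumes "pseudovariety ar U" and "pseudovariety ar V" and "V \<subseteq> U"
    and "\<forall>e\<in>\<Sigma>. is_pid ar U e"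
    and "V = Mods ar U \<Sigma>"
    and "h_strong ar U \<Sigma>"
    and "\<forall>e\<in>\<Sigma>. t_strong ar U e"
    and "\<forall>e\<in>\<Gamma>. is_pid ar U e"
    and "Mods ar U \<Gamma> \<subseteq> V"
    and "h_strong ar V (proj_set V \<Gamma>)"
  shows "h_strong ar U \<Gamma>"
proof -
  have kernel: "\<forall>x\<in>Omega ar U A. \<forall>y\<in>Omega ar U A. proj V A x = proj V A y \<longrightarrow>
      (x, y) \<in> provable ar U \<Gamma> A" if "finite A" for A
    using provable_if_proj_eq_t_strong[OF assms(1,5,6,7,8,9) that] by blast
  show ?thesis
    unfolding h_strong_def
  proof (intro conjI allI impI)
    show "\<forall>e\<in>\<Gamma>. is_pid ar U e" by (fact assms(8))
    fix A u v assume uv: "is_pid ar U (A, u, v) \<and> (\<forall>T\<in>Mods ar U \<Gamma>. holds ar U T (A, u, v))"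
    then have A: "finite A" and u: "u \<in> Omega ar U A" and v: "v \<in> Omega ar U A"
      by (simp_all add: is_pid_iff)
    have ne: "Omega ar U A \<noteq> {}" using u by blast
    have "(proj V A u, proj V A v) \<in> provable ar V (proj_set V \<Gamma>) A"
      using proj_provable_if_valid[OF assms(1,3,8,10)] uv by blast
    then have "(proj V A u, proj V A v) \<in> map_prod (proj V A) (proj V A) ` provable ar U \<Gamma> A"
      by (rule provable_proj_lift[OF assms(1,2,3,8) ne kernel[OF A]])
    then obtain a b where ab: "(a, b) \<in> provable ar U \<Gamma> A"
        "proj V A u = proj V A a" "proj V A v = proj V A b"
      by auto
    moreover have "a \<in> Omega ar U A" "b \<in> Omega ar U A" using provable_Omega[OF assms(1,8) ab(1)] by auto
    ultimately show "(u, v) \<in> provable ar U \<Gamma> A"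
      using kernel[OF A] u v by (metis provable.trans)
  qed
qed

end
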